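(* Let $\psi,\psi^*$ be defined on the horizontal edges of the lattice strip by $\psi(x'+iy)=T^{-y}\psi_{x'}T^{y}$ and $\psi^*(x'+iy)=T^{-y}\psi^*_{x'}T^{y}$ ($x'\in C^*$, $y\in\mathbb Z$). There exist unique extensions $\psi,\psi^*:E\to\mathrm{CliffGen}$ to all edges (in particular the vertical ones) such that: (CSH) for any two edges $z_1,z_2$ adjacent to a common vertex $v$ and a common face with centre $p$, $$\psi(z_1)+\frac{i|v-p|}{v-p}\psi^*(z_1)=\psi(z_2)+\frac{i|v-p|}{v-p}\psi^*(z_2);$$ and (CRBV) $\psi(L)+i\psi^*(L)=0$ and $\psi(R)-i\psi^*(R)=0$ for every left boundary edge $L=a+iy'$ and right boundary edge $R=b+iy'$, $y'\in\mathbb Z+\frac12$.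
   Context: Fix integers $a<0<b$, $C=\{a,\dots,b\}$, $C^*=\{a+\frac12,\dots,b-\frac12\}$. $\tilde V$ is the complex vector space with orthonormal basis $(e_\rho)_{\rho\in\{\pm1\}^C}$. For $x'\in C^*$ let $\varsigma_{x'}(\rho)$ be $\rho$ with the signs of all $\rho_x$, $x<x'$, flipped; define linear maps $\psi_{x'}e_\rho=\frac{-\rho_{x'-1/2}+i\rho_{x'+1/2}}{\sqrt2}e_{\varsigma_{x'}(\rho)}$ and $\psi^*_{x'}e_\rho=\frac{-i\rho_{x'-1/2}+\rho_{x'+1/2}}{\sqrt2}e_{\varsigma_{x'}(\rho)}$; $\mathrm{CliffGen}$ is the complex linear span of all $\psi_{x'},\psi^*_{x'}$. With $\beta=\frac12\log(\sqrt2+1)$, let $T_h^{1/2}$ be diagonal with entries $\exp(\frac\beta2\sum_{x=a}^{b-1}\rho_x\rho_{x+1})$, let $e_\tau^\dagger T_ve_\rho=\exp(\beta\sum_{x=a}^b\rho_x\tau_x)\delta_{\tau_a\rho_a}\delta_{\tau_b\rho_b}$, and $T=T_h^{1/2}T_vT_h^{1/2}$ (an invertible matrix). The lattice strip has vertex set $C\times\mathbb Z\subset\mathbb C$ with nearest-neighbour edges $E$; edges are identified with their midpoints, so horizontal edges are $x'+iy$ ($x'\in C^*$, $y\in\mathbb Z$) and vertical edges are $x+iy'$ ($x\in C$, $y'\in\mathbb Z+\frac12$); faces are the unit squares of the strip, with centres $p$. *)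

theory Defs
  imports Complex_Main
begin

text \<open>Spin configurations rho in {+1,-1}^C, C = {a..b}, are encoded as functions
  int => int taking values +1/-1 on C and the (irrelevant) value 1 outside C.
  A linear map on the space V with orthonormal basis (e_rho) is encoded by its
  matrix M, with M tau rho = <e_tau, M e_rho>, and is required to vanish
  outside configs x configs.\<close>

type_synonym spin = "int \<Rightarrow> int"
type_synonym op = "spin \<Rightarrow> spin \<Rightarrow> complex"

definition configs :: "int \<Rightarrow> int \<Rightarrow> spin set" where
  "configs a b = {\<rho>. (\<forall>x. a \<le> x \<and> x \<le> b \<longrightarrow> \<rho> x = 1 \<or> \<rho> x = -1)
                     \<and> (\<forall>x. \<not> (a \<le> x \<and> x \<le> b) \<longrightarrow> \<rho> x = 1)}"

definition op_supported :: "int \<Rightarrow> int \<Rightarrow> op \<Rightarrow> bool" where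
  "op_supported a b M \<longleftrightarrow>
     (\<forall>\<tau> \<rho>. \<tau> \<notin> configs a b \<or> \<rho> \<notin> configs a b \<longrightarrow> M \<tau> \<rho> = 0)"

definition op_mult :: "int \<Rightarrow> int \<Rightarrow> op \<Rightarrow> op \<Rightarrow> op" where
  "op_mult a b A B = (\<lambda>\<tau> \<rho>. \<Sum>\<sigma>\<in>configs a b. A \<tau> \<sigma> * B \<sigma> \<rho>)"

definition op_id :: "int \<Rightarrow> int \<Rightarrow> op" where
  "op_id a b = (\<lambda>\<tau> \<rho>. if \<tau> = \<rho> \<and> \<rho> \<in> configs a b then 1 else 0)"

definition op_inv :: "int \<Rightarrow> int \<Rightarrow> op \<Rightarrow> op" where
  "op_inv a b M = (THE N. op_supported a b N \<and> op_mult a b N M = op_id a b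
                          \<and> op_mult a b M N = op_id a b)"

definition op_pow :: "int \<Rightarrow> int \<Rightarrow> op \<Rightarrow> nat \<Rightarrow> op" where
  "op_pow a b M n = (op_mult a b M ^^ n) (op_id a b)"

definition op_zpow :: "int \<Rightarrow> int \<Rightarrow> op \<Rightarrow> int \<Rightarrow> op" where
  "op_zpow a b M y = (if 0 \<le> y then op_pow a b M (nat y)
                      else op_pow a b (op_inv a b M) (nat (- y)))"

definition beta :: real where
  "beta = ln (sqrt 2 + 1) / 2"

definition Th_half :: "int \<Rightarrow> int \<Rightarrow> op" where
  "Th_half a b = (\<lambda>\<tau> \<rho>. if \<tau> = \<rho> \<and> \<rho> \<in> configs a b
      then complex_of_real (exp (beta / 2 * (\<Sum>x=a..b-1. real_of_int (\<rho> x * \<rho> (x+1)))))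
      else 0)"

definition Tv :: "int \<Rightarrow> int \<Rightarrow> op" where
  "Tv a b = (\<lambda>\<tau> \<rho>. if \<tau> \<in> configs a b \<and> \<rho> \<in> configs a b \<and> \<tau> a = \<rho> a \<and> \<tau> b = \<rho> b
      then complex_of_real (exp (beta * (\<Sum>x=a..b. real_of_int (\<rho> x * \<tau> x))))
      else 0)"

definition Tmat :: "int \<Rightarrow> int \<Rightarrow> op" where
  "Tmat a b = op_mult a b (Th_half a b) (op_mult a b (Tv a b) (Th_half a b))"

text \<open>Dual points x' in C^* are written x' = k + 1/2 with k in {a..b-1}.
  flip a k rho flips all rho_x with x < x', i.e. x <= k (within C).\<close>
definition flip :: "int \<Rightarrow> int \<Rightarrow> spin \<Rightarrow> spin" where
  "flip a k \<rho> = (\<lambda>x. if a \<le> x \<and> x \<le> k then - \<rho> x else \<rho> x)"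

definition psi0 :: "int \<Rightarrow> int \<Rightarrow> int \<Rightarrow> op" where
  "psi0 a b k = (\<lambda>\<tau> \<rho>. if \<rho> \<in> configs a b \<and> \<tau> = flip a k \<rho>
      then (- of_int (\<rho> k) + \<i> * of_int (\<rho> (k+1))) / complex_of_real (sqrt 2) else 0)"

definition psi0_star :: "int \<Rightarrow> int \<Rightarrow> int \<Rightarrow> op" where
  "psi0_star a b k = (\<lambda>\<tau> \<rho>. if \<rho> \<in> configs a b \<and> \<tau> = flip a k \<rho>
      then (- \<i> * of_int (\<rho> k) + of_int (\<rho> (k+1))) / complex_of_real (sqrt 2) else 0)"

definition CliffGen :: "int \<Rightarrow> int \<Rightarrow> op set" where
  "CliffGen a b = {M. \<exists>c d :: int \<Rightarrow> complex.
      M = (\<lambda>\<tau> \<rho>. \<Sum>k=a..b-1. c k * psi0 a b k \<tau> \<rho> + d k * psi0_star a b k \<tau> \<rho>)}"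

text \<open>Lattice strip: edges identified with their midpoints (complex numbers).\<close>
definition edges :: "int \<Rightarrow> int \<Rightarrow> complex set" where
  "edges a b = {Complex (of_int k + 1/2) (of_int y) | k y. a \<le> k \<and> k \<le> b - 1}
             \<union> {Complex (of_int x) (of_int y + 1/2) | x y. a \<le> x \<and> x \<le> b}"

definition vertices :: "int \<Rightarrow> int \<Rightarrow> complex set" where
  "vertices a b = {Complex (of_int x) (of_int y) | x y. a \<le> x \<and> x \<le> b}"

definition face_centres :: "int \<Rightarrow> int \<Rightarrow> complex set" where
  "face_centres a b = {Complex (of_int k + 1/2) (of_int y + 1/2) | k y. a \<le> k \<and> k \<le> b - 1}"

text \<open>An edge z is adjacent to vertex v iff |z - v| = 1/2; an edge z borders the
  face with centre p iff |z - p| = 1/2.\<close>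
definition extension_conds :: "int \<Rightarrow> int \<Rightarrow> (complex \<Rightarrow> op) \<Rightarrow> (complex \<Rightarrow> op) \<Rightarrow> bool" where
  "extension_conds a b \<Psi> \<Psi>s \<longleftrightarrow>
     (\<forall>z\<in>edges a b. \<Psi> z \<in> CliffGen a b \<and> \<Psi>s z \<in> CliffGen a b)
   \<and> (\<forall>k y. a \<le> k \<and> k \<le> b - 1 \<longrightarrow>
        \<Psi> (Complex (of_int k + 1/2) (of_int y)) =
          op_mult a b (op_zpow a b (Tmat a b) (- y)) (op_mult a b (psi0 a b k) (op_zpow a b (Tmat a b) y))
      \<and> \<Psi>s (Complex (of_int k + 1/2) (of_int y)) =
          op_mult a b (op_zpow a b (Tmat a b) (- y)) (op_mult a b (psi0_star a b k) (op_zpow a b (Tmat a b) y)))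
   \<and> (\<forall>z1\<in>edges a b. \<forall>z2\<in>edges a b. \<forall>v\<in>vertices a b. \<forall>p\<in>face_centres a b.
        cmod (z1 - v) = 1/2 \<and> cmod (z2 - v) = 1/2 \<and> cmod (z1 - p) = 1/2 \<and> cmod (z2 - p) = 1/2
        \<longrightarrow> (\<forall>\<tau> \<rho>.
             \<Psi> z1 \<tau> \<rho> + \<i> * complex_of_real (cmod (v - p)) / (v - p) * \<Psi>s z1 \<tau> \<rho> =
             \<Psi> z2 \<tau> \<rho> + \<i> * complex_of_real (cmod (v - p)) / (v - p) * \<Psi>s z2 \<tau> \<rho>))
   \<and> (\<forall>y::int. \<forall>\<tau> \<rho>.
        \<Psi> (Complex (of_int a) (of_int y + 1/2)) \<tau> \<rho> + \<i> * \<Psi>s (Complex (of_int a) (of_int y + 1/2)) \<tau> \<rho> = 0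
      \<and> \<Psi> (Complex (of_int b) (of_int y + 1/2)) \<tau> \<rho> - \<i> * \<Psi>s (Complex (of_int b) (of_int y + 1/2)) \<tau> \<rho> = 0)"

end

theory Submission
  imports Defs "HOL-Library.FuncSet"
begin

text \<open>On the horizontal side of a face, \<open>\<psi> + \<lambda> \<psi>\<^sup>*\<close> with \<open>\<lambda>\<close> the CSH coefficient of one of the
  four corners of the face is a multiple of one of four special generators.  An explicit
  computation with the entries of \<open>T\<close>, which are Gibbs weights at the critical \<open>\<beta>\<close>, shows that
  \<open>T\<^sup>-\<^sup>1 X T\<close> is a combination of the two bottom-corner generators when \<open>X\<close> is a top-corner
  generator; in particular conjugation by \<open>T\<close> preserves \<open>CliffGen\<close>.  On a vertical edge, \<open>\<psi>\<close> and
  \<open>\<psi>\<^sup>*\<close> are defined as the solution of the two CSH equations at its lower endpoint (one of them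
  replaced by the boundary condition at \<open>x = a, b\<close>); the CSH equations at the upper endpoint are then
  exactly these commutation relations, and conjugation by powers of \<open>T\<close> moves everything to
  every row.  Uniqueness holds because both endpoints of a vertical edge are corners of one face
  with different CSH coefficients, so the CSH equations with the two horizontal sides of that face
  determine \<open>\<psi>\<close> and \<open>\<psi>\<^sup>*\<close> on the edge.\<close>

section \<open>Matrices indexed by spin configurations\<close>

lemma flip_flip [simp]: "flip a k (flip a k \<rho>) = \<rho>"
  by (auto simp: flip_def)

lemma flip_in_configs_iff [simp]:
  assumes "k \<le> b"
  shows "flip a k \<rho> \<in> configs a b \<longleftrightarrow> \<rho> \<in> configs a b"
proof -
  have "flip a k \<sigma> \<in> configs a b" if "\<sigma> \<in> configs a b" for \<sigma>
    using that assms by (auto simp: flip_def configs_def)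
  then show ?thesis by (metis flip_flip)
qed

lemma configs_pm1: "\<rho> \<in> configs a b \<Longrightarrow> a \<le> x \<Longrightarrow> x \<le> b \<Longrightarrow> \<rho> x = 1 \<or> \<rho> x = -1"
  by (auto simp: configs_def)

lemma bij_betw_restrict_configs:
  "bij_betw (\<lambda>\<sigma>. restrict \<sigma> {a..b}) (configs a b) (PiE {a..b} (\<lambda>_. {1, -1}))"
  by (rule bij_betw_byWitness[where f' = "\<lambda>g x. if x \<in> {a..b} then g x else 1"])
    (auto simp: configs_def PiE_def Pi_def extensional_def fun_eq_iff)

lemma finite_configs [simp]: "finite (configs a b)"
proof -
  have "finite (PiE {a..b} (\<lambda>_. {1::int, -1}))" by (intro finite_PiE) auto
  then show ?thesis using bij_betw_finite[OF bij_betw_restrict_configs] by blast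
qed

lemma sum_configs_prod:
  fixes F :: "int \<Rightarrow> int \<Rightarrow> 'c::comm_semiring_1"
  shows "(\<Sum>\<sigma>\<in>configs a b. \<Prod>x\<in>{a..b}. F x (\<sigma> x)) = (\<Prod>x\<in>{a..b}. F x 1 + F x (-1))"
proof -
  have "(\<Sum>\<sigma>\<in>configs a b. \<Prod>x\<in>{a..b}. F x (\<sigma> x))
      = (\<Sum>\<sigma>\<in>configs a b. (\<lambda>g. \<Prod>x\<in>{a..b}. F x (g x)) (restrict \<sigma> {a..b}))"
    by (intro sum.cong refl prod.cong) auto
  also have "\<dots> = (\<Sum>g\<in>PiE {a..b} (\<lambda>_. {1, -1}). \<Prod>x\<in>{a..b}. F x (g x))"
    by (rule sum.reindex_bij_betw[OF bij_betw_restrict_configs])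
  also have "\<dots> = (\<Prod>x\<in>{a..b}. \<Sum>s\<in>{1, -1}. F x s)"
    by (rule prod_sum_PiE[symmetric]) auto
  finally show ?thesis by simp
qed

lemma op_mult_assoc: "op_mult a b (op_mult a b A B) C = op_mult a b A (op_mult a b B C)"
  unfolding op_mult_def
  by (auto simp: fun_eq_iff sum_distrib_left sum_distrib_right mult.assoc intro: sum.swap)

lemma op_mult_id_left: "op_supported a b M \<Longrightarrow> op_mult a b (op_id a b) M = M"
proof (intro ext)
  fix \<tau> \<rho> assume M: "op_supported a b M"
  have "op_mult a b (op_id a b) M \<tau> \<rho> = (\<Sum>\<sigma>\<in>configs a b. if \<sigma> = \<tau> then M \<sigma> \<rho> else 0)"
    unfolding op_mult_def op_id_def by (intro sum.cong) auto
  then show "op_mult a b (op_id a b) M \<tau> \<rho> = M \<tau> \<rho>" using M by (simp add: op_supported_def)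
qed

lemma op_mult_id_right: "op_supported a b M \<Longrightarrow> op_mult a b M (op_id a b) = M"
proof (intro ext)
  fix \<tau> \<rho> assume M: "op_supported a b M"
  have "op_mult a b M (op_id a b) \<tau> \<rho> = (\<Sum>\<sigma>\<in>configs a b. if \<sigma> = \<rho> then M \<tau> \<sigma> else 0)"
    unfolding op_mult_def op_id_def by (intro sum.cong) auto
  then show "op_mult a b M (op_id a b) \<tau> \<rho> = M \<tau> \<rho>" using M by (simp add: op_supported_def)
qed

lemma op_supported_mult [intro]:
  "op_supported a b A \<Longrightarrow> op_supported a b B \<Longrightarrow> op_supported a b (op_mult a b A B)"
  unfolding op_supported_def op_mult_def by auto

lemma op_supported_id [intro]: "op_supported a b (op_id a b)"
  unfolding op_supported_def op_id_def by auto

lemma op_supported_lincomb [intro]: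
  "op_supported a b A \<Longrightarrow> op_supported a b B \<Longrightarrow> op_supported a b (\<lambda>\<tau> \<rho>. c1 * A \<tau> \<rho> + c2 * B \<tau> \<rho>)"
  unfolding op_supported_def by auto

lemma op_supported_sum:
  "(\<And>k. k \<in> K \<Longrightarrow> op_supported a b (G k)) \<Longrightarrow> op_supported a b (\<lambda>\<tau> \<rho>. \<Sum>k\<in>K. G k \<tau> \<rho>)"
  unfolding op_supported_def by auto

lemma op_mult_lincomb_left:
  "op_mult a b (\<lambda>\<tau> \<rho>. c1 * A \<tau> \<rho> + c2 * B \<tau> \<rho>) M
     = (\<lambda>\<tau> \<rho>. c1 * op_mult a b A M \<tau> \<rho> + c2 * op_mult a b B M \<tau> \<rho>)"
  unfolding op_mult_def by (simp add: fun_eq_iff sum.distrib sum_distrib_left algebra_simps)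

lemma op_mult_lincomb_right:
  "op_mult a b M (\<lambda>\<tau> \<rho>. c1 * A \<tau> \<rho> + c2 * B \<tau> \<rho>)
     = (\<lambda>\<tau> \<rho>. c1 * op_mult a b M A \<tau> \<rho> + c2 * op_mult a b M B \<tau> \<rho>)"
  unfolding op_mult_def by (simp add: fun_eq_iff sum.distrib sum_distrib_left algebra_simps)

lemma op_mult_sum_left:
  "op_mult a b (\<lambda>\<tau> \<rho>. \<Sum>k\<in>K. G k \<tau> \<rho>) M = (\<lambda>\<tau> \<rho>. \<Sum>k\<in>K. op_mult a b (G k) M \<tau> \<rho>)"
  unfolding op_mult_def by (intro ext) (simp add: sum_distrib_right sum.swap[of _ K])

lemma op_mult_sum_right:
  "op_mult a b M (\<lambda>\<tau> \<rho>. \<Sum>k\<in>K. G k \<tau> \<rho>) = (\<lambda>\<tau> \<rho>. \<Sum>k\<in>K. op_mult a b M (G k) \<tau> \<rho>)"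
  unfolding op_mult_def by (intro ext) (simp add: sum_distrib_left sum.swap[of _ K])

lemma op_inv_eqI:
  assumes "op_supported a b N" "op_mult a b N M = op_id a b" "op_mult a b M N = op_id a b"
  shows "op_inv a b M = N"
  unfolding op_inv_def
proof (rule the_equality)
  fix N' assume N': "op_supported a b N' \<and> op_mult a b N' M = op_id a b \<and> op_mult a b M N' = op_id a b"
  then have "N' = op_mult a b N' (op_mult a b M N)"
    using assms by (simp add: op_mult_id_right)
  also have "\<dots> = N"
    using N' assms(1) by (simp flip: op_mult_assoc add: op_mult_id_left)
  finally show "N' = N" .
qed (use assms in blast)

section \<open>The span of the fermion operators\<close>

definition flip_op :: "int \<Rightarrow> int \<Rightarrow> int \<Rightarrow> (spin \<Rightarrow> complex) \<Rightarrow> op" where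
  "flip_op a b k f = (\<lambda>\<tau> \<rho>. if \<rho> \<in> configs a b \<and> \<tau> = flip a k \<rho> then f \<rho> else 0)"

definition cgen :: "int \<Rightarrow> int \<Rightarrow> int \<Rightarrow> complex \<Rightarrow> complex \<Rightarrow> op" where
  "cgen a b k \<alpha> \<gamma> = flip_op a b k (\<lambda>\<rho>. \<alpha> * of_int (\<rho> k) + \<gamma> * of_int (\<rho> (k + 1)))"

abbreviation sqrt2 :: complex where "sqrt2 \<equiv> complex_of_real (sqrt 2)"

lemma sqrt2_times_sqrt2: "sqrt2 * sqrt2 = 2" "sqrt2 * (sqrt2 * x) = 2 * x"
proof -
  show "sqrt2 * sqrt2 = 2" by (metis of_real_mult of_real_numeral real_sqrt_mult_self real_sqrt_abs2 abs_numeral)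
  then show "sqrt2 * (sqrt2 * x) = 2 * x" by (simp add: mult.assoc[symmetric])
qed

lemma op_mult_flip_op_left:
  assumes "k \<le> b"
  shows "op_mult a b (flip_op a b k f) M \<tau> \<rho> =
    (if \<tau> \<in> configs a b then f (flip a k \<tau>) * M (flip a k \<tau>) \<rho> else 0)"
proof -
  have "op_mult a b (flip_op a b k f) M \<tau> \<rho> =
     (\<Sum>\<sigma>\<in>configs a b. if \<sigma> = flip a k \<tau> then f \<sigma> * M \<sigma> \<rho> else 0)"
    unfolding op_mult_def flip_op_def by (intro sum.cong) auto
  then show ?thesis using assms by simp
qed

lemma op_mult_flip_op_right:
  assumes "k \<le> b"
  shows "op_mult a b M (flip_op a b k f) \<tau> \<rho> =
    (if \<rho> \<in> configs a b then M \<tau> (flip a k \<rho>) * f \<rho> else 0)"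
proof -
  have "op_mult a b M (flip_op a b k f) \<tau> \<rho> =
     (\<Sum>\<sigma>\<in>configs a b. if \<sigma> = flip a k \<rho> then (if \<rho> \<in> configs a b then M \<tau> \<sigma> * f \<rho> else 0) else 0)"
    unfolding op_mult_def flip_op_def by (intro sum.cong) auto
  then show ?thesis using assms by simp
qed

lemma op_supported_cgen [intro]: "k \<le> b \<Longrightarrow> op_supported a b (cgen a b k \<alpha> \<gamma>)"
  unfolding op_supported_def cgen_def flip_op_def by auto

lemma cgen_lincomb:
  "c1 * cgen a b k \<alpha>1 \<gamma>1 \<tau> \<rho> + c2 * cgen a b k \<alpha>2 \<gamma>2 \<tau> \<rho>
     = cgen a b k (c1 * \<alpha>1 + c2 * \<alpha>2) (c1 * \<gamma>1 + c2 * \<gamma>2) \<tau> \<rho>"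
  unfolding cgen_def flip_op_def by (simp add: algebra_simps)

lemma cgen_scale: "c * cgen a b k \<alpha> \<gamma> \<tau> \<rho> = cgen a b k (c * \<alpha>) (c * \<gamma>) \<tau> \<rho>"
  unfolding cgen_def flip_op_def by (simp add: algebra_simps)

lemma psi0_eq_cgen: "psi0 a b k = cgen a b k (-1 / sqrt2) (\<i> / sqrt2)"
  unfolding psi0_def cgen_def flip_op_def by (intro ext) (simp add: field_simps)

lemma psi0_star_eq_cgen: "psi0_star a b k = cgen a b k (-\<i> / sqrt2) (1 / sqrt2)"
  unfolding psi0_star_def cgen_def flip_op_def by (intro ext) (simp add: field_simps)

lemma CliffGen_eqI:
  "M = (\<lambda>\<tau> \<rho>. \<Sum>k=a..b-1. c k * psi0 a b k \<tau> \<rho> + d k * psi0_star a b k \<tau> \<rho>) \<Longrightarrow> M \<in> CliffGen a b"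
  unfolding CliffGen_def by blast

lemma CliffGen_lincomb [intro]:
  assumes "A \<in> CliffGen a b" "B \<in> CliffGen a b"
  shows "(\<lambda>\<tau> \<rho>. c1 * A \<tau> \<rho> + c2 * B \<tau> \<rho>) \<in> CliffGen a b"
proof -
  obtain cA dA where A: "A = (\<lambda>\<tau> \<rho>. \<Sum>k=a..b-1. cA k * psi0 a b k \<tau> \<rho> + dA k * psi0_star a b k \<tau> \<rho>)"
    using assms(1) unfolding CliffGen_def by blast
  obtain cB dB where B: "B = (\<lambda>\<tau> \<rho>. \<Sum>k=a..b-1. cB k * psi0 a b k \<tau> \<rho> + dB k * psi0_star a b k \<tau> \<rho>)"
    using assms(2) unfolding CliffGen_def by blast
  have "(\<lambda>\<tau> \<rho>. c1 * A \<tau> \<rho> + c2 * B \<tau> \<rho>) = (\<lambda>\<tau> \<rho>. \<Sum>k=a..b-1.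
      (c1 * cA k + c2 * cB k) * psi0 a b k \<tau> \<rho> + (c1 * dA k + c2 * dB k) * psi0_star a b k \<tau> \<rho>)"
    by (auto simp: A B fun_eq_iff sum_distrib_left sum.distrib[symmetric] algebra_simps intro!: sum.cong)
  then show ?thesis by (rule CliffGen_eqI)
qed

lemma CliffGen_sum:
  assumes "finite K" "\<And>k. k \<in> K \<Longrightarrow> G k \<in> CliffGen a b"
  shows "(\<lambda>\<tau> \<rho>. \<Sum>k\<in>K. G k \<tau> \<rho>) \<in> CliffGen a b"
  using assms
proof (induction K rule: finite_induct)
  case empty
  have "(\<lambda>\<tau> \<rho>. \<Sum>k=a..b-1. 0 * psi0 a b k \<tau> \<rho> + 0 * psi0_star a b k \<tau> \<rho>) \<in> CliffGen a b"
    by (rule CliffGen_eqI) (rule refl)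
  then show ?case by simp
next
  case (insert x F)
  then have "(\<lambda>\<tau> \<rho>. 1 * G x \<tau> \<rho> + 1 * (\<Sum>k\<in>F. G k \<tau> \<rho>)) \<in> CliffGen a b"
    by (intro CliffGen_lincomb) auto
  then show ?case using insert by simp
qed

lemma CliffGen_psi0_lincomb:
  assumes "a \<le> k" "k \<le> b - 1"
  shows "(\<lambda>\<tau> \<rho>. c * psi0 a b k \<tau> \<rho> + d * psi0_star a b k \<tau> \<rho>) \<in> CliffGen a b"
proof (rule CliffGen_eqI[where c = "\<lambda>j. if j = k then c else 0" and d = "\<lambda>j. if j = k then d else 0"],
    intro ext)
  fix \<tau> \<rho>
  have "(\<Sum>j=a..b-1. (if j = k then c else 0) * psi0 a b j \<tau> \<rho> + (if j = k then d else 0) * psi0_star a b j \<tau> \<rho>)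
      = (\<Sum>j=a..b-1. if j = k then c * psi0 a b k \<tau> \<rho> + d * psi0_star a b k \<tau> \<rho> else 0)"
    by (intro sum.cong) auto
  then show "c * psi0 a b k \<tau> \<rho> + d * psi0_star a b k \<tau> \<rho>
      = (\<Sum>j=a..b-1. (if j = k then c else 0) * psi0 a b j \<tau> \<rho> + (if j = k then d else 0) * psi0_star a b j \<tau> \<rho>)"
    using assms by simp
qed

lemma CliffGen_cgen [intro]:
  assumes "a \<le> k" "k \<le> b - 1"
  shows "cgen a b k \<alpha> \<gamma> \<in> CliffGen a b"
proof -
  have ii: "\<i> * (\<i> * x) = - x" for x by (simp flip: mult.assoc)
  have div2: "x / sqrt2 * (y / sqrt2) = x * y / 2" for x y
    by (metis sqrt2_times_sqrt2(1) times_divide_times_eq)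
  have "cgen a b k \<alpha> \<gamma> = (\<lambda>\<tau> \<rho>. (- (\<alpha> + \<i> * \<gamma>) / sqrt2) * psi0 a b k \<tau> \<rho>
                                  + ((\<gamma> + \<i> * \<alpha>) / sqrt2) * psi0_star a b k \<tau> \<rho>)"
    unfolding psi0_eq_cgen psi0_star_eq_cgen cgen_lincomb
  proof (intro ext, rule arg_cong2[where f="\<lambda>x y. cgen a b k x y _ _"])
    show "\<alpha> = - (\<alpha> + \<i> * \<gamma>) / sqrt2 * (- 1 / sqrt2) + (\<gamma> + \<i> * \<alpha>) / sqrt2 * (- \<i> / sqrt2)"
      unfolding div2 by (simp add: ii field_simps)
    show "\<gamma> = - (\<alpha> + \<i> * \<gamma>) / sqrt2 * (\<i> / sqrt2) + (\<gamma> + \<i> * \<alpha>) / sqrt2 * (1 / sqrt2)"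
      unfolding div2 by (simp add: ii field_simps)
  qed
  then show ?thesis using CliffGen_psi0_lincomb[OF assms] by (simp only:)
qed

lemma op_supported_CliffGen:
  assumes "X \<in> CliffGen a b"
  shows "op_supported a b X"
proof -
  obtain c d where X: "X = (\<lambda>\<tau> \<rho>. \<Sum>k=a..b-1. c k * psi0 a b k \<tau> \<rho> + d k * psi0_star a b k \<tau> \<rho>)"
    using assms unfolding CliffGen_def by blast
  show ?thesis unfolding X psi0_eq_cgen psi0_star_eq_cgen
    by (intro op_supported_sum op_supported_lincomb op_supported_cgen) auto
qed

section \<open>Entries of the transfer matrix\<close>

definition horiz_energy :: "int \<Rightarrow> int \<Rightarrow> spin \<Rightarrow> real" where
  "horiz_energy a b \<rho> = (\<Sum>x=a..b-1. real_of_int (\<rho> x * \<rho> (x + 1)))"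

definition overlap :: "int \<Rightarrow> int \<Rightarrow> spin \<Rightarrow> spin \<Rightarrow> real" where
  "overlap a j \<tau> \<rho> = (\<Sum>x=a..j. real_of_int (\<rho> x * \<tau> x))"

definition half_weight :: "int \<Rightarrow> int \<Rightarrow> spin \<Rightarrow> complex" where
  "half_weight a b \<rho> = complex_of_real (exp (beta / 2 * horiz_energy a b \<rho>))"

definition exp_beta :: "int \<Rightarrow> real" where
  "exp_beta n = exp (beta * of_int n)"

lemma op_mult_Th_half_left:
  "op_mult a b (Th_half a b) M \<tau> \<rho> = (if \<tau> \<in> configs a b then half_weight a b \<tau> * M \<tau> \<rho> else 0)"
proof -
  have "op_mult a b (Th_half a b) M \<tau> \<rho> =
     (\<Sum>\<sigma>\<in>configs a b. if \<sigma> = \<tau> then half_weight a b \<tau> * M \<tau> \<rho> else 0)"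
    unfolding op_mult_def Th_half_def half_weight_def horiz_energy_def by (intro sum.cong) auto
  then show ?thesis by simp
qed

lemma op_mult_Th_half_right:
  "op_mult a b M (Th_half a b) \<tau> \<rho> = (if \<rho> \<in> configs a b then M \<tau> \<rho> * half_weight a b \<rho> else 0)"
proof -
  have "op_mult a b M (Th_half a b) \<tau> \<rho> =
     (\<Sum>\<sigma>\<in>configs a b. if \<sigma> = \<rho> then (if \<rho> \<in> configs a b then M \<tau> \<rho> * half_weight a b \<rho> else 0) else 0)"
    unfolding op_mult_def Th_half_def half_weight_def horiz_energy_def by (intro sum.cong) auto
  then show ?thesis by simp
qed

lemma Tmat_entry:
  "Tmat a b \<tau> \<rho> = (if \<tau> \<in> configs a b \<and> \<rho> \<in> configs a b \<and> \<tau> a = \<rho> a \<and> \<tau> b = \<rho> b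
     then complex_of_real (exp (beta / 2 * horiz_energy a b \<tau> + beta * overlap a b \<tau> \<rho>
                                + beta / 2 * horiz_energy a b \<rho>))
     else 0)"
  unfolding Tmat_def op_mult_Th_half_left op_mult_Th_half_right
  by (auto simp: Tv_def half_weight_def overlap_def exp_add)

lemma horiz_energy_flip:
  assumes "a \<le> j" "j \<le> b - 1"
  shows "horiz_energy a b (flip a j \<rho>) = horiz_energy a b \<rho> - 2 * real_of_int (\<rho> j * \<rho> (j + 1))"
proof -
  have "horiz_energy a b (flip a j \<rho>) = (\<Sum>x=a..b-1. real_of_int (\<rho> x * \<rho> (x + 1)) -
          (if x = j then 2 * real_of_int (\<rho> j * \<rho> (j + 1)) else 0))"
    unfolding horiz_energy_def by (intro sum.cong refl) (auto simp: flip_def)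
  then show ?thesis
    using assms by (simp add: sum_subtractf horiz_energy_def)
qed

lemma overlap_flip:
  assumes "j \<le> b"
  shows "overlap a b \<tau> (flip a j \<rho>) = overlap a b \<tau> \<rho> - 2 * overlap a j \<tau> \<rho>"
    and "overlap a b (flip a j \<tau>) \<rho> = overlap a b \<tau> \<rho> - 2 * overlap a j \<tau> \<rho>"
proof -
  have "{x \<in> {a..b}. x \<le> j} = {a..j}" using assms by auto
  then have "overlap a b \<tau> \<rho> - 2 * overlap a j \<tau> \<rho> =
      (\<Sum>x=a..b. real_of_int (\<rho> x * \<tau> x) - (if x \<le> j then 2 * real_of_int (\<rho> x * \<tau> x) else 0))"
    by (simp add: overlap_def sum_subtractf sum_distrib_left sum.inter_filter[symmetric])
  moreover have "overlap a b \<tau> (flip a j \<rho>) = \<dots>" "overlap a b (flip a j \<tau>) \<rho> = \<dots>"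
    unfolding overlap_def by (auto simp: flip_def intro!: sum.cong)
  ultimately show "overlap a b \<tau> (flip a j \<rho>) = overlap a b \<tau> \<rho> - 2 * overlap a j \<tau> \<rho>"
    and "overlap a b (flip a j \<tau>) \<rho> = overlap a b \<tau> \<rho> - 2 * overlap a j \<tau> \<rho>"
    by simp_all
qed

definition flip_exponent :: "int \<Rightarrow> int \<Rightarrow> int \<Rightarrow> spin \<Rightarrow> spin \<Rightarrow> real" where
  "flip_exponent a b j \<tau> \<rho> = beta / 2 * horiz_energy a b \<tau> + beta * (overlap a b \<tau> \<rho> - 2 * overlap a j \<tau> \<rho>)
     + beta / 2 * horiz_energy a b \<rho>"

lemma flip_exponent_pred:
  assumes "a \<le> j"
  shows "exp (flip_exponent a b (j - 1) \<tau> \<rho>) * exp_beta n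
       = exp (flip_exponent a b j \<tau> \<rho>) * exp_beta (2 * \<tau> j * \<rho> j + n)"
proof -
  have "{a..j} = insert j {a..j - 1}" using assms by auto
  then have "overlap a j \<tau> \<rho> = overlap a (j - 1) \<tau> \<rho> + real_of_int (\<rho> j * \<tau> j)"
    by (simp add: overlap_def)
  then show ?thesis
    by (simp add: flip_exponent_def exp_beta_def flip: exp_add) (simp add: algebra_simps)
qed

lemma Tmat_flip:
  assumes "a \<le> j" "j \<le> b - 1" "\<tau> \<in> configs a b" "\<rho> \<in> configs a b"
  shows "Tmat a b (flip a j \<tau>) \<rho> = (if \<tau> a = - \<rho> a \<and> \<tau> b = \<rho> b
           then complex_of_real (exp (flip_exponent a b j \<tau> \<rho>) * exp_beta (- (\<tau> j * \<tau> (j + 1)))) else 0)"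
    and "Tmat a b \<tau> (flip a j \<rho>) = (if \<tau> a = - \<rho> a \<and> \<tau> b = \<rho> b
           then complex_of_real (exp (flip_exponent a b j \<tau> \<rho>) * exp_beta (- (\<rho> j * \<rho> (j + 1)))) else 0)"
proof -
  have e: "flip a j \<sigma> a = - \<sigma> a" "flip a j \<sigma> b = \<sigma> b" for \<sigma> using assms by (auto simp: flip_def)
  show "Tmat a b (flip a j \<tau>) \<rho> = (if \<tau> a = - \<rho> a \<and> \<tau> b = \<rho> b
           then complex_of_real (exp (flip_exponent a b j \<tau> \<rho>) * exp_beta (- (\<tau> j * \<tau> (j + 1)))) else 0)"
    and "Tmat a b \<tau> (flip a j \<rho>) = (if \<tau> a = - \<rho> a \<and> \<tau> b = \<rho> b
           then complex_of_real (exp (flip_exponent a b j \<tau> \<rho>) * exp_beta (- (\<rho> j * \<rho> (j + 1)))) else 0)"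
    unfolding Tmat_entry using assms
    by (auto simp: e horiz_energy_flip overlap_flip flip_exponent_def exp_beta_def
        simp flip: exp_add intro!: arg_cong[where f = exp]; simp add: algebra_simps)+
qed

section \<open>Commutation of the generators with the transfer matrix\<close>

lemma exp_beta_add: "exp_beta (m + n) = exp_beta m * exp_beta n"
  by (simp add: exp_beta_def distrib_left exp_add)

lemma exp_beta_values:
  "exp_beta 1 * exp_beta 1 = 1 + sqrt 2"
  "exp_beta (-1) = exp_beta 1 * (sqrt 2 - 1)"
  "exp_beta 3 = exp_beta 1 * (1 + sqrt 2)"
  "exp_beta (-3) = exp_beta 1 * (sqrt 2 - 1) * (sqrt 2 - 1)"
proof -
  have "exp_beta 2 = 1 + sqrt 2"
    using add_pos_pos[of "sqrt 2" 1] by (simp add: exp_beta_def beta_def add.commute)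
  then show sq: "exp_beta 1 * exp_beta 1 = 1 + sqrt 2"
    using exp_beta_add[of 1 1] by simp
  have "exp_beta (-1) = exp_beta (-1) * (exp_beta 1 * exp_beta 1) * (sqrt 2 - 1)"
    unfolding sq by (simp add: algebra_simps)
  also have "\<dots> = exp_beta 1 * (sqrt 2 - 1)"
    using exp_beta_add[of "-1" 1] by (simp add: exp_beta_def algebra_simps)
  finally show m1: "exp_beta (-1) = exp_beta 1 * (sqrt 2 - 1)" .
  show "exp_beta 3 = exp_beta 1 * (1 + sqrt 2)"
    using exp_beta_add[of 1 2] \<open>exp_beta 2 = 1 + sqrt 2\<close> by simp
  have "exp_beta (-3) = exp_beta (-1) * exp_beta (-1) * exp_beta (-1)"
    using exp_beta_add[of "-1" "-2"] exp_beta_add[of "-1" "-1"] by simp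
  also have "\<dots> = (exp_beta 1 * exp_beta 1) * (sqrt 2 - 1) * (sqrt 2 - 1) * exp_beta 1 * (sqrt 2 - 1)"
    unfolding m1 by (simp add: algebra_simps)
  also have "\<dots> = exp_beta 1 * (sqrt 2 - 1) * (sqrt 2 - 1)"
    unfolding sq by (simp add: algebra_simps)
  finally show "exp_beta (-3) = exp_beta 1 * (sqrt 2 - 1) * (sqrt 2 - 1)" .
qed

text \<open>These identities are checked by enumerating the spins; \<open>E = exp_beta\<close> and \<open>q = sqrt 2\<close> are
  abstracted to keep the enumeration cheap.\<close>

lemma exp_beta_identity_tl:
  fixes t0 t1 rm r0 r1 :: int and q e :: real and E :: "int \<Rightarrow> real"
  assumes "q * q = 2" "E 1 = e" "E (-1) = e * (q - 1)" "E 3 = e * (1 + q)" "E (-3) = e * (q - 1) * (q - 1)"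
  assumes "t0 = 1 \<or> t0 = -1" "t1 = 1 \<or> t1 = -1" "rm = 1 \<or> rm = -1" "r0 = 1 \<or> r0 = -1" "r1 = 1 \<or> r1 = -1"
  shows "((1 + q) * t0 + t1) * E (- (t0 * t1)) =
     - q * ((1 + q) * r0 + r1) * E (- (r0 * r1)) + (1 + q) * ((q - 1) * rm + r0) * E (2 * t0 * r0 - rm * r0)"
proof -
  have q2: "q * (q * x) = 2 * x" for x using assms(1) by (simp flip: mult.assoc)
  show ?thesis using assms(6-) by (elim disjE; simp add: assms(1-5) algebra_simps q2)
qed

lemma exp_beta_identity_tr:
  fixes tm t0 rm r0 r1 :: int and q e :: real and E :: "int \<Rightarrow> real"
  assumes "q * q = 2" "E 1 = e" "E (-1) = e * (q - 1)" "E 3 = e * (1 + q)" "E (-3) = e * (q - 1) * (q - 1)"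
  assumes "tm = 1 \<or> tm = -1" "t0 = 1 \<or> t0 = -1" "rm = 1 \<or> rm = -1" "r0 = 1 \<or> r0 = -1" "r1 = 1 \<or> r1 = -1"
  shows "((q - 1) * tm + t0) * E (2 * r0 * t0 - tm * t0) =
     (1 - q) * ((1 + q) * r0 + r1) * E (- (r0 * r1)) + q * ((q - 1) * rm + r0) * E (2 * t0 * r0 - rm * r0)"
proof -
  have q2: "q * (q * x) = 2 * x" for x using assms(1) by (simp flip: mult.assoc)
  show ?thesis using assms(6-) by (elim disjE; simp add: assms(1-5) algebra_simps q2)
qed

lemma exp_beta_identity_left:
  fixes t0 t1 r1 :: int and q e :: real and E :: "int \<Rightarrow> real"
  assumes "q * q = 2" "E 1 = e" "E (-1) = e * (q - 1)"
  assumes "t0 = 1 \<or> t0 = -1" "t1 = 1 \<or> t1 = -1" "r1 = 1 \<or> r1 = -1"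
  shows "((1 + q) * t0 + t1) * E (- (t0 * t1)) = - ((1 + q) * - t0 + r1) * E (t0 * r1)"
proof -
  have q2: "q * (q * x) = 2 * x" for x using assms(1) by (simp flip: mult.assoc)
  show ?thesis using assms(4-) by (elim disjE; simp add: assms(1-3) algebra_simps q2)
qed

lemma exp_beta_identity_right:
  fixes t0 t1 r0 :: int and q e :: real and E :: "int \<Rightarrow> real"
  assumes "q * q = 2" "E 1 = e" "E (-1) = e * (q - 1)"
  assumes "t0 = 1 \<or> t0 = -1" "t1 = 1 \<or> t1 = -1" "r0 = 1 \<or> r0 = -1"
  shows "((q - 1) * t0 + t1) * E (- (t0 * t1)) = ((q - 1) * r0 + t1) * E (- (r0 * t1))"
proof -
  have q2: "q * (q * x) = 2 * x" for x using assms(1) by (simp flip: mult.assoc)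
  show ?thesis using assms(4-) by (elim disjE; simp add: assms(1-3) algebra_simps q2)
qed

lemma cgen_Tmat_commuteI:
  assumes j: "a \<le> j" "j \<le> b - 1" and j1: "a \<le> j1" "j1 \<le> b - 1" and j2: "a \<le> j2" "j2 \<le> b - 1"
    and entries: "\<And>\<tau> \<rho>. \<tau> \<in> configs a b \<Longrightarrow> \<rho> \<in> configs a b \<Longrightarrow> \<tau> a = - \<rho> a \<Longrightarrow> \<tau> b = \<rho> b \<Longrightarrow>
      (\<gamma> * of_int (\<tau> (j + 1)) - \<alpha> * of_int (\<tau> j)) * Tmat a b (flip a j \<tau>) \<rho>
      = c1 * (Tmat a b \<tau> (flip a j1 \<rho>) * (\<alpha>1 * of_int (\<rho> j1) + \<gamma>1 * of_int (\<rho> (j1 + 1))))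
      + c2 * (Tmat a b \<tau> (flip a j2 \<rho>) * (\<alpha>2 * of_int (\<rho> j2) + \<gamma>2 * of_int (\<rho> (j2 + 1))))"
  shows "op_mult a b (cgen a b j \<alpha> \<gamma>) (Tmat a b)
       = op_mult a b (Tmat a b) (\<lambda>\<tau> \<rho>. c1 * cgen a b j1 \<alpha>1 \<gamma>1 \<tau> \<rho> + c2 * cgen a b j2 \<alpha>2 \<gamma>2 \<tau> \<rho>)"
proof (intro ext)
  fix \<tau> \<rho>
  have "flip a j \<tau> j = - \<tau> j" "flip a j \<tau> (j + 1) = \<tau> (j + 1)" using j by (auto simp: flip_def)
  then have L: "op_mult a b (cgen a b j \<alpha> \<gamma>) (Tmat a b) \<tau> \<rho> = (if \<tau> \<in> configs a b
      then (\<gamma> * of_int (\<tau> (j + 1)) - \<alpha> * of_int (\<tau> j)) * Tmat a b (flip a j \<tau>) \<rho> else 0)"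
    using j unfolding cgen_def by (simp add: op_mult_flip_op_left algebra_simps)
  have R: "op_mult a b (Tmat a b) (\<lambda>\<tau> \<rho>. c1 * cgen a b j1 \<alpha>1 \<gamma>1 \<tau> \<rho> + c2 * cgen a b j2 \<alpha>2 \<gamma>2 \<tau> \<rho>) \<tau> \<rho>
      = (if \<rho> \<in> configs a b then
           c1 * (Tmat a b \<tau> (flip a j1 \<rho>) * (\<alpha>1 * of_int (\<rho> j1) + \<gamma>1 * of_int (\<rho> (j1 + 1))))
         + c2 * (Tmat a b \<tau> (flip a j2 \<rho>) * (\<alpha>2 * of_int (\<rho> j2) + \<gamma>2 * of_int (\<rho> (j2 + 1)))) else 0)"
    using j1 j2 unfolding op_mult_lincomb_right cgen_def by (simp add: op_mult_flip_op_right)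
  consider "\<tau> \<notin> configs a b \<or> \<rho> \<notin> configs a b"
    | "\<tau> \<in> configs a b" "\<rho> \<in> configs a b" "\<not> (\<tau> a = - \<rho> a \<and> \<tau> b = \<rho> b)"
    | "\<tau> \<in> configs a b" "\<rho> \<in> configs a b" "\<tau> a = - \<rho> a" "\<tau> b = \<rho> b"
    by blast
  then show "op_mult a b (cgen a b j \<alpha> \<gamma>) (Tmat a b) \<tau> \<rho>
      = op_mult a b (Tmat a b) (\<lambda>\<tau> \<rho>. c1 * cgen a b j1 \<alpha>1 \<gamma>1 \<tau> \<rho> + c2 * cgen a b j2 \<alpha>2 \<gamma>2 \<tau> \<rho>) \<tau> \<rho>"
  proof cases
    case 1
    then show ?thesis unfolding L R using j1 j2 by (auto simp: Tmat_entry)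
  next
    case 2
    then show ?thesis unfolding L R using j j1 j2 by (auto simp: Tmat_flip)
  next
    case 3
    then show ?thesis unfolding L R by (simp add: entries)
  qed
qed

text \<open>Up to scalar factors (see \<open>psi0_corners\<close>) these are \<open>psi0 + \<lambda> * psi0_star\<close> at the
  horizontal edge \<open>k\<close>, for the CSH coefficient \<open>\<lambda>\<close> of the bottom-left, bottom-right, top-left and
  top-right corner of a face having this edge as a side.\<close>

abbreviation "gen_bl a b k \<equiv> cgen a b k (1 + sqrt2) 1"
abbreviation "gen_br a b k \<equiv> cgen a b k (sqrt2 - 1) 1"
abbreviation "gen_tl a b k \<equiv> cgen a b k (- (1 + sqrt2)) 1"
abbreviation "gen_tr a b k \<equiv> cgen a b k (1 - sqrt2) 1"

lemma gen_tl_Tmat_bulk: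
  assumes "a < X" "X < b"
  shows "op_mult a b (gen_tl a b X) (Tmat a b) =
         op_mult a b (Tmat a b) (\<lambda>\<tau> \<rho>. - sqrt2 * gen_bl a b X \<tau> \<rho> + (1 + sqrt2) * gen_br a b (X - 1) \<tau> \<rho>)"
proof (rule cgen_Tmat_commuteI)
  fix \<tau> \<rho> assume \<tau>: "\<tau> \<in> configs a b" and \<rho>: "\<rho> \<in> configs a b" and bd: "\<tau> a = - \<rho> a" "\<tau> b = \<rho> b"
  define Z where "Z = exp (flip_exponent a b X \<tau> \<rho>)"
  have T: "Tmat a b (flip a X \<tau>) \<rho> = complex_of_real (Z * exp_beta (- (\<tau> X * \<tau> (X + 1))))"
    "Tmat a b \<tau> (flip a X \<rho>) = complex_of_real (Z * exp_beta (- (\<rho> X * \<rho> (X + 1))))"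
    "Tmat a b \<tau> (flip a (X - 1) \<rho>) = complex_of_real (Z * exp_beta (2 * \<tau> X * \<rho> X - \<rho> (X - 1) * \<rho> X))"
    using assms \<tau> \<rho> bd Tmat_flip[of a X b \<tau> \<rho>] Tmat_flip[of a "X - 1" b \<tau> \<rho>] flip_exponent_pred[of a X b \<tau> \<rho>]
    by (simp_all add: Z_def)
  have pm: "\<tau> X = 1 \<or> \<tau> X = -1" "\<tau> (X + 1) = 1 \<or> \<tau> (X + 1) = -1" "\<rho> (X - 1) = 1 \<or> \<rho> (X - 1) = -1"
    "\<rho> X = 1 \<or> \<rho> X = -1" "\<rho> (X + 1) = 1 \<or> \<rho> (X + 1) = -1"
    using assms configs_pm1[OF \<tau>] configs_pm1[OF \<rho>] by auto
  have "((1 + sqrt 2) * \<tau> X + \<tau> (X + 1)) * exp_beta (- (\<tau> X * \<tau> (X + 1)))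
      = - sqrt 2 * ((1 + sqrt 2) * \<rho> X + \<rho> (X + 1)) * exp_beta (- (\<rho> X * \<rho> (X + 1)))
        + (1 + sqrt 2) * ((sqrt 2 - 1) * \<rho> (X - 1) + \<rho> X) * exp_beta (2 * \<tau> X * \<rho> X - \<rho> (X - 1) * \<rho> X)"
    by (rule exp_beta_identity_tl[OF _ refl exp_beta_values(2-4) pm]) simp
  then have "complex_of_real (Z * (((1 + sqrt 2) * \<tau> X + \<tau> (X + 1)) * exp_beta (- (\<tau> X * \<tau> (X + 1)))))
      = complex_of_real (Z * (- sqrt 2 * ((1 + sqrt 2) * \<rho> X + \<rho> (X + 1)) * exp_beta (- (\<rho> X * \<rho> (X + 1)))
          + (1 + sqrt 2) * ((sqrt 2 - 1) * \<rho> (X - 1) + \<rho> X) * exp_beta (2 * \<tau> X * \<rho> X - \<rho> (X - 1) * \<rho> X)))"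
    by simp
  then show "(1 * of_int (\<tau> (X + 1)) - - (1 + sqrt2) * of_int (\<tau> X)) * Tmat a b (flip a X \<tau>) \<rho> =
    - sqrt2 * (Tmat a b \<tau> (flip a X \<rho>) * ((1 + sqrt2) * of_int (\<rho> X) + 1 * of_int (\<rho> (X + 1)))) +
    (1 + sqrt2) * (Tmat a b \<tau> (flip a (X - 1) \<rho>) * ((sqrt2 - 1) * of_int (\<rho> (X - 1)) + 1 * of_int (\<rho> (X - 1 + 1))))"
    unfolding T by (simp add: algebra_simps sqrt2_times_sqrt2)
qed (use assms in auto)

lemma gen_tr_Tmat_bulk:
  assumes "a < X" "X < b"
  shows "op_mult a b (gen_tr a b (X - 1)) (Tmat a b) =
         op_mult a b (Tmat a b) (\<lambda>\<tau> \<rho>. (1 - sqrt2) * gen_bl a b X \<tau> \<rho> + sqrt2 * gen_br a b (X - 1) \<tau> \<rho>)"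
proof (rule cgen_Tmat_commuteI)
  fix \<tau> \<rho> assume \<tau>: "\<tau> \<in> configs a b" and \<rho>: "\<rho> \<in> configs a b" and bd: "\<tau> a = - \<rho> a" "\<tau> b = \<rho> b"
  define Z where "Z = exp (flip_exponent a b X \<tau> \<rho>)"
  have T: "Tmat a b (flip a (X - 1) \<tau>) \<rho> = complex_of_real (Z * exp_beta (2 * \<tau> X * \<rho> X - \<tau> (X - 1) * \<tau> X))"
    "Tmat a b \<tau> (flip a X \<rho>) = complex_of_real (Z * exp_beta (- (\<rho> X * \<rho> (X + 1))))"
    "Tmat a b \<tau> (flip a (X - 1) \<rho>) = complex_of_real (Z * exp_beta (2 * \<tau> X * \<rho> X - \<rho> (X - 1) * \<rho> X))"
    using assms \<tau> \<rho> bd Tmat_flip[of a X b \<tau> \<rho>] Tmat_flip[of a "X - 1" b \<tau> \<rho>] flip_exponent_pred[of a X b \<tau> \<rho>]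
    by (simp_all add: Z_def)
  have pm: "\<tau> (X - 1) = 1 \<or> \<tau> (X - 1) = -1" "\<tau> X = 1 \<or> \<tau> X = -1" "\<rho> (X - 1) = 1 \<or> \<rho> (X - 1) = -1"
    "\<rho> X = 1 \<or> \<rho> X = -1" "\<rho> (X + 1) = 1 \<or> \<rho> (X + 1) = -1"
    using assms configs_pm1[OF \<tau>] configs_pm1[OF \<rho>] by auto
  have "((sqrt 2 - 1) * \<tau> (X - 1) + \<tau> X) * exp_beta (2 * \<rho> X * \<tau> X - \<tau> (X - 1) * \<tau> X)
      = (1 - sqrt 2) * ((1 + sqrt 2) * \<rho> X + \<rho> (X + 1)) * exp_beta (- (\<rho> X * \<rho> (X + 1)))
        + sqrt 2 * ((sqrt 2 - 1) * \<rho> (X - 1) + \<rho> X) * exp_beta (2 * \<tau> X * \<rho> X - \<rho> (X - 1) * \<rho> X)"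
    by (rule exp_beta_identity_tr[OF _ refl exp_beta_values(2-4) pm]) simp
  then have "complex_of_real (Z * (((sqrt 2 - 1) * \<tau> (X - 1) + \<tau> X) * exp_beta (2 * \<rho> X * \<tau> X - \<tau> (X - 1) * \<tau> X)))
      = complex_of_real (Z * ((1 - sqrt 2) * ((1 + sqrt 2) * \<rho> X + \<rho> (X + 1)) * exp_beta (- (\<rho> X * \<rho> (X + 1)))
        + sqrt 2 * ((sqrt 2 - 1) * \<rho> (X - 1) + \<rho> X) * exp_beta (2 * \<tau> X * \<rho> X - \<rho> (X - 1) * \<rho> X)))"
    by simp
  then show "(1 * of_int (\<tau> (X - 1 + 1)) - (1 - sqrt2) * of_int (\<tau> (X - 1))) * Tmat a b (flip a (X - 1) \<tau>) \<rho> =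
    (1 - sqrt2) * (Tmat a b \<tau> (flip a X \<rho>) * ((1 + sqrt2) * of_int (\<rho> X) + 1 * of_int (\<rho> (X + 1)))) +
    sqrt2 * (Tmat a b \<tau> (flip a (X - 1) \<rho>) * ((sqrt2 - 1) * of_int (\<rho> (X - 1)) + 1 * of_int (\<rho> (X - 1 + 1))))"
    unfolding T by (simp add: algebra_simps sqrt2_times_sqrt2)
qed (use assms in auto)

lemma gen_tl_Tmat_left:
  assumes "a < b"
  shows "op_mult a b (gen_tl a b a) (Tmat a b) = op_mult a b (Tmat a b) (cgen a b a (- (1 + sqrt2)) (- 1))"
proof -
  have "op_mult a b (gen_tl a b a) (Tmat a b) = op_mult a b (Tmat a b)
      (\<lambda>\<tau> \<rho>. 1 * cgen a b a (- (1 + sqrt2)) (- 1) \<tau> \<rho> + 0 * cgen a b a (- (1 + sqrt2)) (- 1) \<tau> \<rho>)"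
  proof (rule cgen_Tmat_commuteI)
    fix \<tau> \<rho> assume \<tau>: "\<tau> \<in> configs a b" and \<rho>: "\<rho> \<in> configs a b" and bd: "\<tau> a = - \<rho> a" "\<tau> b = \<rho> b"
    define Z where "Z = exp (flip_exponent a b a \<tau> \<rho>)"
    have T: "Tmat a b (flip a a \<tau>) \<rho> = complex_of_real (Z * exp_beta (- (\<tau> a * \<tau> (a + 1))))"
      "Tmat a b \<tau> (flip a a \<rho>) = complex_of_real (Z * exp_beta (\<tau> a * \<rho> (a + 1)))"
      using assms \<tau> \<rho> bd Tmat_flip[of a a b \<tau> \<rho>] by (simp_all add: Z_def)
    have pm: "\<tau> a = 1 \<or> \<tau> a = -1" "\<tau> (a + 1) = 1 \<or> \<tau> (a + 1) = -1" "\<rho> (a + 1) = 1 \<or> \<rho> (a + 1) = -1"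
      using assms configs_pm1[OF \<tau>] configs_pm1[OF \<rho>] by auto
    have "((1 + sqrt 2) * \<tau> a + \<tau> (a + 1)) * exp_beta (- (\<tau> a * \<tau> (a + 1)))
        = - ((1 + sqrt 2) * - \<tau> a + \<rho> (a + 1)) * exp_beta (\<tau> a * \<rho> (a + 1))"
      by (rule exp_beta_identity_left[OF _ refl exp_beta_values(2) pm]) simp
    then have "complex_of_real (Z * (((1 + sqrt 2) * \<tau> a + \<tau> (a + 1)) * exp_beta (- (\<tau> a * \<tau> (a + 1)))))
        = complex_of_real (Z * (- ((1 + sqrt 2) * - \<tau> a + \<rho> (a + 1)) * exp_beta (\<tau> a * \<rho> (a + 1))))"
      by simp
    then show "(1 * of_int (\<tau> (a + 1)) - - (1 + sqrt2) * of_int (\<tau> a)) * Tmat a b (flip a a \<tau>) \<rho> =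
      1 * (Tmat a b \<tau> (flip a a \<rho>) * (- (1 + sqrt2) * of_int (\<rho> a) + - 1 * of_int (\<rho> (a + 1)))) +
      0 * (Tmat a b \<tau> (flip a a \<rho>) * (- (1 + sqrt2) * of_int (\<rho> a) + - 1 * of_int (\<rho> (a + 1))))"
      unfolding T using bd by (simp add: algebra_simps)
  qed (use assms in auto)
  then show ?thesis by simp
qed

lemma gen_tr_Tmat_right:
  assumes "a < b"
  shows "op_mult a b (gen_tr a b (b - 1)) (Tmat a b) = op_mult a b (Tmat a b) (gen_br a b (b - 1))"
proof -
  have "op_mult a b (gen_tr a b (b - 1)) (Tmat a b) = op_mult a b (Tmat a b)
      (\<lambda>\<tau> \<rho>. 1 * gen_br a b (b - 1) \<tau> \<rho> + 0 * gen_br a b (b - 1) \<tau> \<rho>)"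
  proof (rule cgen_Tmat_commuteI)
    fix \<tau> \<rho> assume \<tau>: "\<tau> \<in> configs a b" and \<rho>: "\<rho> \<in> configs a b" and bd: "\<tau> a = - \<rho> a" "\<tau> b = \<rho> b"
    define Z where "Z = exp (flip_exponent a b (b - 1) \<tau> \<rho>)"
    have T: "Tmat a b (flip a (b - 1) \<tau>) \<rho> = complex_of_real (Z * exp_beta (- (\<tau> (b - 1) * \<tau> b)))"
      "Tmat a b \<tau> (flip a (b - 1) \<rho>) = complex_of_real (Z * exp_beta (- (\<rho> (b - 1) * \<tau> b)))"
      using assms \<tau> \<rho> bd Tmat_flip[of a "b - 1" b \<tau> \<rho>] by (simp_all add: Z_def)
    have pm: "\<tau> (b - 1) = 1 \<or> \<tau> (b - 1) = -1" "\<tau> b = 1 \<or> \<tau> b = -1" "\<rho> (b - 1) = 1 \<or> \<rho> (b - 1) = -1"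
      using assms configs_pm1[OF \<tau>] configs_pm1[OF \<rho>] by auto
    have "((sqrt 2 - 1) * \<tau> (b - 1) + \<tau> b) * exp_beta (- (\<tau> (b - 1) * \<tau> b))
        = ((sqrt 2 - 1) * \<rho> (b - 1) + \<tau> b) * exp_beta (- (\<rho> (b - 1) * \<tau> b))"
      by (rule exp_beta_identity_right[OF _ refl exp_beta_values(2) pm]) simp
    then have "complex_of_real (Z * (((sqrt 2 - 1) * \<tau> (b - 1) + \<tau> b) * exp_beta (- (\<tau> (b - 1) * \<tau> b))))
        = complex_of_real (Z * (((sqrt 2 - 1) * \<rho> (b - 1) + \<tau> b) * exp_beta (- (\<rho> (b - 1) * \<tau> b))))"
      by simp
    then show "(1 * of_int (\<tau> (b - 1 + 1)) - (1 - sqrt2) * of_int (\<tau> (b - 1))) * Tmat a b (flip a (b - 1) \<tau>) \<rho> =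
      1 * (Tmat a b \<tau> (flip a (b - 1) \<rho>) * ((sqrt2 - 1) * of_int (\<rho> (b - 1)) + 1 * of_int (\<rho> (b - 1 + 1)))) +
      0 * (Tmat a b \<tau> (flip a (b - 1) \<rho>) * ((sqrt2 - 1) * of_int (\<rho> (b - 1)) + 1 * of_int (\<rho> (b - 1 + 1))))"
      unfolding T using bd by (simp add: algebra_simps)
  qed (use assms in auto)
  then show ?thesis by simp
qed

section \<open>The inverse of the transfer matrix\<close>

definition prod_kernel :: "int \<Rightarrow> int \<Rightarrow> (int \<Rightarrow> int \<Rightarrow> int \<Rightarrow> complex) \<Rightarrow> op" where
  "prod_kernel a b f = (\<lambda>\<tau> \<rho>. if \<tau> \<in> configs a b \<and> \<rho> \<in> configs a b then \<Prod>x\<in>{a..b}. f x (\<tau> x) (\<rho> x) else 0)"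

lemma op_mult_prod_kernel:
  assumes inverse: "\<And>x t r. x \<in> {a..b} \<Longrightarrow> t \<in> {1, -1} \<Longrightarrow> r \<in> {1, -1} \<Longrightarrow>
    f x t 1 * g x 1 r + f x t (-1) * g x (-1) r = (if t = r then 1 else 0)"
  shows "op_mult a b (prod_kernel a b f) (prod_kernel a b g) = op_id a b"
proof (intro ext)
  fix \<tau> \<rho>
  show "op_mult a b (prod_kernel a b f) (prod_kernel a b g) \<tau> \<rho> = op_id a b \<tau> \<rho>"
  proof (cases "\<tau> \<in> configs a b \<and> \<rho> \<in> configs a b")
    case False
    then show ?thesis by (auto simp: op_mult_def op_id_def prod_kernel_def)
  next
    case True
    have "op_mult a b (prod_kernel a b f) (prod_kernel a b g) \<tau> \<rho>
        = (\<Sum>\<sigma>\<in>configs a b. \<Prod>x\<in>{a..b}. f x (\<tau> x) (\<sigma> x) * g x (\<sigma> x) (\<rho> x))"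
      unfolding op_mult_def prod_kernel_def using True by (simp add: prod.distrib)
    also have "\<dots> = (\<Prod>x\<in>{a..b}. f x (\<tau> x) 1 * g x 1 (\<rho> x) + f x (\<tau> x) (-1) * g x (-1) (\<rho> x))"
      by (rule sum_configs_prod)
    also have "\<dots> = (\<Prod>x\<in>{a..b}. if \<tau> x = \<rho> x then 1 else 0)"
      using True by (intro prod.cong refl inverse) (auto simp: configs_def)
    also have "\<dots> = (if \<forall>x\<in>{a..b}. \<tau> x = \<rho> x then 1 else 0)"
      by (induction rule: finite_induct[OF finite_atLeastAtMost_int]) auto
    also have "\<dots> = op_id a b \<tau> \<rho>"
      using True by (auto simp: op_id_def configs_def fun_eq_iff)
    finally show ?thesis .
  qed
qed

definition Tv_factor :: "int \<Rightarrow> int \<Rightarrow> int \<Rightarrow> int \<Rightarrow> int \<Rightarrow> complex" where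
  "Tv_factor a b x s s' = (if (x = a \<or> x = b) \<and> s \<noteq> s' then 0 else complex_of_real (exp_beta (s * s')))"

definition Tv_inv_factor :: "int \<Rightarrow> int \<Rightarrow> int \<Rightarrow> int \<Rightarrow> int \<Rightarrow> complex" where
  "Tv_inv_factor a b x s s' = (if x = a \<or> x = b then (if s = s' then complex_of_real (exp_beta (-1)) else 0)
      else complex_of_real (of_int (s * s') * exp_beta (s * s') / 2))"

lemma Tv_eq_prod_kernel: "Tv a b = prod_kernel a b (Tv_factor a b)"
proof (intro ext)
  fix \<tau> \<rho>
  show "Tv a b \<tau> \<rho> = prod_kernel a b (Tv_factor a b) \<tau> \<rho>"
  proof (cases "\<tau> \<in> configs a b \<and> \<rho> \<in> configs a b \<and> \<tau> a = \<rho> a \<and> \<tau> b = \<rho> b")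
    case True
    have "(\<Prod>x\<in>{a..b}. Tv_factor a b x (\<tau> x) (\<rho> x))
        = (\<Prod>x\<in>{a..b}. complex_of_real (exp (beta * real_of_int (\<rho> x * \<tau> x))))"
      using True by (intro prod.cong refl) (auto simp: Tv_factor_def exp_beta_def mult.commute)
    also have "\<dots> = complex_of_real (exp (beta * (\<Sum>x=a..b. real_of_int (\<rho> x * \<tau> x))))"
      by (simp add: exp_sum sum_distrib_left)
    finally show ?thesis using True by (simp add: Tv_def prod_kernel_def)
  next
    case False
    then have "\<tau> \<notin> configs a b \<or> \<rho> \<notin> configs a b \<or> (\<exists>x\<in>{a..b}. Tv_factor a b x (\<tau> x) (\<rho> x) = 0)"
      by (cases "a \<le> b") (auto simp: Tv_factor_def configs_def)
    then show ?thesis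
      using False by (auto simp: Tv_def prod_kernel_def prod_zero_iff)
  qed
qed

lemma Tv_factor_inverse:
  assumes "t \<in> {1, -1}" "r \<in> {1, -1}"
  shows "Tv_factor a b x t 1 * Tv_inv_factor a b x 1 r + Tv_factor a b x t (-1) * Tv_inv_factor a b x (-1) r
           = (if t = r then 1 else 0)"
    and "Tv_inv_factor a b x t 1 * Tv_factor a b x 1 r + Tv_inv_factor a b x t (-1) * Tv_factor a b x (-1) r
           = (if t = r then 1 else 0)"
proof -
  have "exp_beta (-1) * exp_beta (-1) = (exp_beta 1 * exp_beta 1) * ((sqrt 2 - 1) * (sqrt 2 - 1))"
    by (simp add: exp_beta_values(2) algebra_simps)
  also have "\<dots> = sqrt 2 - 1"
    by (simp add: exp_beta_values(1) algebra_simps)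
  finally have "exp_beta (-1) * exp_beta (-1) = sqrt 2 - 1" .
  moreover have "exp_beta 1 * exp_beta (-1) = 1"
    using exp_beta_add[of 1 "-1"] by (simp add: exp_beta_def)
  ultimately have e: "complex_of_real (exp_beta 1) * complex_of_real (exp_beta 1) = 1 + sqrt2"
    "complex_of_real (exp_beta (-1)) * complex_of_real (exp_beta (-1)) = sqrt2 - 1"
    "complex_of_real (exp_beta 1) * complex_of_real (exp_beta (-1)) = 1"
    "complex_of_real (exp_beta (-1)) * complex_of_real (exp_beta 1) = 1"
    using exp_beta_values(1) by (metis mult.commute of_real_mult of_real_add of_real_diff of_real_1)+
  show "Tv_factor a b x t 1 * Tv_inv_factor a b x 1 r + Tv_factor a b x t (-1) * Tv_inv_factor a b x (-1) r
           = (if t = r then 1 else 0)"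
    and "Tv_inv_factor a b x t 1 * Tv_factor a b x 1 r + Tv_inv_factor a b x t (-1) * Tv_factor a b x (-1) r
           = (if t = r then 1 else 0)"
    using assms by (auto simp: Tv_factor_def Tv_inv_factor_def e field_simps)
qed

definition Th_half_inv :: "int \<Rightarrow> int \<Rightarrow> op" where
  "Th_half_inv a b = (\<lambda>\<tau> \<rho>. if \<tau> = \<rho> \<and> \<rho> \<in> configs a b then inverse (half_weight a b \<rho>) else 0)"

definition Tmat_inv :: "int \<Rightarrow> int \<Rightarrow> op" where
  "Tmat_inv a b = op_mult a b (Th_half_inv a b)
     (op_mult a b (prod_kernel a b (Tv_inv_factor a b)) (Th_half_inv a b))"

lemma Th_half_inverse:
  "op_mult a b (Th_half a b) (Th_half_inv a b) = op_id a b"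
  "op_mult a b (Th_half_inv a b) (Th_half a b) = op_id a b"
  by (intro ext; auto simp: op_mult_Th_half_left op_mult_Th_half_right Th_half_inv_def op_id_def half_weight_def)+

lemma op_supported_Tmat [intro]: "op_supported a b (Tmat a b)"
  and op_supported_Tmat_inv [intro]: "op_supported a b (Tmat_inv a b)"
proof -
  have "op_supported a b (Th_half a b)" "op_supported a b (Th_half_inv a b)" "op_supported a b (Tv a b)"
    "op_supported a b (prod_kernel a b f)" for f
    by (auto simp: op_supported_def Th_half_def Th_half_inv_def Tv_def prod_kernel_def)
  then show "op_supported a b (Tmat a b)" "op_supported a b (Tmat_inv a b)"
    unfolding Tmat_def Tmat_inv_def by blast+
qed

lemma Tmat_inverse:
  "op_mult a b (Tmat a b) (Tmat_inv a b) = op_id a b"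
  "op_mult a b (Tmat_inv a b) (Tmat a b) = op_id a b"
proof -
  have supp: "op_supported a b (Th_half a b)" "op_supported a b (Th_half_inv a b)"
    "op_supported a b (prod_kernel a b f)" for f
    by (auto simp: op_supported_def Th_half_def Th_half_inv_def prod_kernel_def)
  have Tv: "op_mult a b (Tv a b) (prod_kernel a b (Tv_inv_factor a b)) = op_id a b"
    "op_mult a b (prod_kernel a b (Tv_inv_factor a b)) (Tv a b) = op_id a b"
    unfolding Tv_eq_prod_kernel by (intro op_mult_prod_kernel Tv_factor_inverse; simp)+
  let ?H = "Th_half a b" and ?Hi = "Th_half_inv a b" and ?V = "Tv a b"
    and ?Vi = "prod_kernel a b (Tv_inv_factor a b)"
  have "op_mult a b (Tmat a b) (Tmat_inv a b)
      = op_mult a b ?H (op_mult a b ?V (op_mult a b (op_mult a b ?H ?Hi) (op_mult a b ?Vi ?Hi)))"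
    unfolding Tmat_def Tmat_inv_def by (simp add: op_mult_assoc)
  also have "\<dots> = op_mult a b ?H (op_mult a b (op_mult a b ?V ?Vi) ?Hi)"
    by (simp add: Th_half_inverse op_mult_id_left supp op_supported_mult op_mult_assoc)
  also have "\<dots> = op_id a b"
    by (simp add: Tv op_mult_id_left supp Th_half_inverse)
  finally show "op_mult a b (Tmat a b) (Tmat_inv a b) = op_id a b" .
  have "op_mult a b (Tmat_inv a b) (Tmat a b)
      = op_mult a b ?Hi (op_mult a b ?Vi (op_mult a b (op_mult a b ?Hi ?H) (op_mult a b ?V ?H)))"
    unfolding Tmat_def Tmat_inv_def by (simp add: op_mult_assoc)
  also have "\<dots> = op_mult a b ?Hi (op_mult a b (op_mult a b ?Vi ?V) ?H)"
    by (simp add: Th_half_inverse op_mult_id_left supp Tv_eq_prod_kernel op_supported_mult op_mult_assoc)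
  also have "\<dots> = op_id a b"
    by (simp add: Tv op_mult_id_left supp Th_half_inverse)
  finally show "op_mult a b (Tmat_inv a b) (Tmat a b) = op_id a b" .
qed

lemma op_inv_Tmat: "op_inv a b (Tmat a b) = Tmat_inv a b"
  using Tmat_inverse by (intro op_inv_eqI) auto

section \<open>Conjugation by powers of the transfer matrix\<close>

definition sandwich :: "int \<Rightarrow> int \<Rightarrow> op \<Rightarrow> op \<Rightarrow> op \<Rightarrow> op" where
  "sandwich a b L R X = op_mult a b L (op_mult a b X R)"

abbreviation "Tconj_up a b \<equiv> sandwich a b (Tmat_inv a b) (Tmat a b)"
abbreviation "Tconj_down a b \<equiv> sandwich a b (Tmat a b) (Tmat_inv a b)"

definition Tconj :: "int \<Rightarrow> int \<Rightarrow> int \<Rightarrow> op \<Rightarrow> op" where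
  "Tconj a b y = sandwich a b (op_zpow a b (Tmat a b) (- y)) (op_zpow a b (Tmat a b) y)"

lemma sandwich_lincomb:
  "sandwich a b L R (\<lambda>\<tau> \<rho>. c1 * A \<tau> \<rho> + c2 * B \<tau> \<rho>)
     = (\<lambda>\<tau> \<rho>. c1 * sandwich a b L R A \<tau> \<rho> + c2 * sandwich a b L R B \<tau> \<rho>)"
  unfolding sandwich_def op_mult_lincomb_left op_mult_lincomb_right ..

lemma sandwich_sum:
  "sandwich a b L R (\<lambda>\<tau> \<rho>. \<Sum>k\<in>K. G k \<tau> \<rho>) = (\<lambda>\<tau> \<rho>. \<Sum>k\<in>K. sandwich a b L R (G k) \<tau> \<rho>)"
  unfolding sandwich_def op_mult_sum_left op_mult_sum_right ..

lemma Tconj_up_eqI: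
  assumes "op_mult a b U (Tmat a b) = op_mult a b (Tmat a b) Y" "op_supported a b Y"
  shows "Tconj_up a b U = Y"
  unfolding sandwich_def assms(1) op_mult_assoc[symmetric] Tmat_inverse op_mult_id_left[OF assms(2)] ..

lemma Tconj_down_eqI:
  assumes "op_mult a b U (Tmat a b) = op_mult a b (Tmat a b) Y" "op_supported a b U"
  shows "Tconj_down a b Y = U"
  unfolding sandwich_def op_mult_assoc[symmetric] assms(1)[symmetric]
  unfolding op_mult_assoc Tmat_inverse op_mult_id_right[OF assms(2)] ..

lemma Tconj_up_gen_tl:
  assumes "a < X" "X < b"
  shows "Tconj_up a b (gen_tl a b X)
       = (\<lambda>\<tau> \<rho>. - sqrt2 * gen_bl a b X \<tau> \<rho> + (1 + sqrt2) * gen_br a b (X - 1) \<tau> \<rho>)"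
  using assms by (intro Tconj_up_eqI gen_tl_Tmat_bulk op_supported_lincomb op_supported_cgen) auto

lemma Tconj_up_gen_tr:
  assumes "a < X" "X < b"
  shows "Tconj_up a b (gen_tr a b (X - 1))
       = (\<lambda>\<tau> \<rho>. (1 - sqrt2) * gen_bl a b X \<tau> \<rho> + sqrt2 * gen_br a b (X - 1) \<tau> \<rho>)"
  using assms by (intro Tconj_up_eqI gen_tr_Tmat_bulk op_supported_lincomb op_supported_cgen) auto

lemma Tconj_up_gen_tl_left: "a < b \<Longrightarrow> Tconj_up a b (gen_tl a b a) = cgen a b a (- (1 + sqrt2)) (- 1)"
  by (intro Tconj_up_eqI gen_tl_Tmat_left op_supported_cgen) auto

lemma Tconj_up_gen_tr_right: "a < b \<Longrightarrow> Tconj_up a b (gen_tr a b (b - 1)) = gen_br a b (b - 1)"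
  by (intro Tconj_up_eqI gen_tr_Tmat_right op_supported_cgen) auto

lemma sandwich_CliffGen:
  assumes gen: "\<And>k \<alpha> \<gamma>. a \<le> k \<Longrightarrow> k \<le> b - 1 \<Longrightarrow> sandwich a b L R (cgen a b k \<alpha> \<gamma>) \<in> CliffGen a b"
    and X: "X \<in> CliffGen a b"
  shows "sandwich a b L R X \<in> CliffGen a b"
proof -
  obtain c d where X: "X = (\<lambda>\<tau> \<rho>. \<Sum>k=a..b-1. c k * psi0 a b k \<tau> \<rho> + d k * psi0_star a b k \<tau> \<rho>)"
    using X unfolding CliffGen_def by blast
  show ?thesis unfolding X sandwich_sum sandwich_lincomb
    by (intro CliffGen_sum CliffGen_lincomb) (auto simp: psi0_eq_cgen psi0_star_eq_cgen intro: gen)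
qed

lemma sandwich_lincomb_CliffGen:
  assumes "sandwich a b L R A \<in> CliffGen a b" "sandwich a b L R B \<in> CliffGen a b"
  shows "sandwich a b L R (\<lambda>\<tau> \<rho>. c1 * A \<tau> \<rho> + c2 * B \<tau> \<rho>) \<in> CliffGen a b"
  unfolding sandwich_lincomb using assms by blast

lemma cgen_eq_tl_tr:
  "cgen a b k \<alpha> \<gamma> = (\<lambda>\<tau> \<rho>. (((1 - sqrt2) * \<gamma> - \<alpha>) / 2) * gen_tl a b k \<tau> \<rho>
                                + ((\<alpha> + (1 + sqrt2) * \<gamma>) / 2) * gen_tr a b k \<tau> \<rho>)"
  unfolding cgen_lincomb by (intro ext arg_cong2[where f = "\<lambda>x y. cgen a b k x y _ _"])
    (simp_all add: field_simps algebra_simps sqrt2_times_sqrt2)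

lemma cgen_eq_bl_br:
  "cgen a b k \<alpha> \<gamma> = (\<lambda>\<tau> \<rho>. ((\<alpha> - (sqrt2 - 1) * \<gamma>) / 2) * gen_bl a b k \<tau> \<rho>
                                + (((1 + sqrt2) * \<gamma> - \<alpha>) / 2) * gen_br a b k \<tau> \<rho>)"
  unfolding cgen_lincomb by (intro ext arg_cong2[where f = "\<lambda>x y. cgen a b k x y _ _"])
    (simp_all add: field_simps algebra_simps sqrt2_times_sqrt2)

lemma Tconj_up_cgen_CliffGen:
  assumes "a < b" "a \<le> k" "k \<le> b - 1"
  shows "Tconj_up a b (cgen a b k \<alpha> \<gamma>) \<in> CliffGen a b"
proof -
  have "Tconj_up a b (gen_tl a b k) \<in> CliffGen a b"
  proof (cases "k = a")
    case True
    then show ?thesis using assms Tconj_up_gen_tl_left by auto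
  next
    case False
    then have k: "a < k" "k < b" using assms by auto
    show ?thesis unfolding Tconj_up_gen_tl[OF k] using k by (intro CliffGen_lincomb CliffGen_cgen; simp)
  qed
  moreover have "Tconj_up a b (gen_tr a b k) \<in> CliffGen a b"
  proof (cases "k = b - 1")
    case True
    then show ?thesis using assms Tconj_up_gen_tr_right by auto
  next
    case False
    then have k: "a < k + 1" "k + 1 < b" using assms by auto
    from Tconj_up_gen_tr[OF k] show ?thesis
      using k by (simp only: add_diff_cancel_right') (intro CliffGen_lincomb CliffGen_cgen; simp)
  qed
  ultimately show ?thesis
    by (subst cgen_eq_tl_tr) (rule sandwich_lincomb_CliffGen)
qed

lemma Tconj_down_gen_bl_CliffGen:
  assumes "a < b" "a \<le> k" "k \<le> b - 1"
  shows "Tconj_down a b (gen_bl a b k) \<in> CliffGen a b"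
proof (cases "k = a")
  case True
  have "Tconj_down a b (cgen a b a (- (1 + sqrt2)) (- 1)) = gen_tl a b a"
    using assms by (intro Tconj_down_eqI gen_tl_Tmat_left op_supported_cgen) auto
  moreover have "gen_bl a b a = (\<lambda>\<tau> \<rho>. (- 1) * cgen a b a (- (1 + sqrt2)) (- 1) \<tau> \<rho>
                                        + 0 * cgen a b a (- (1 + sqrt2)) (- 1) \<tau> \<rho>)"
    by (simp add: cgen_def flip_op_def fun_eq_iff algebra_simps)
  ultimately show ?thesis
    unfolding True using assms by (simp only:) (intro sandwich_lincomb_CliffGen; auto)
next
  case False
  then have k: "a < k" "k < b" using assms by auto
  have "Tconj_down a b (\<lambda>\<tau> \<rho>. - sqrt2 * gen_bl a b k \<tau> \<rho> + (1 + sqrt2) * gen_br a b (k - 1) \<tau> \<rho>) = gen_tl a b k"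
    "Tconj_down a b (\<lambda>\<tau> \<rho>. (1 - sqrt2) * gen_bl a b k \<tau> \<rho> + sqrt2 * gen_br a b (k - 1) \<tau> \<rho>) = gen_tr a b (k - 1)"
    using k by (intro Tconj_down_eqI gen_tl_Tmat_bulk gen_tr_Tmat_bulk op_supported_cgen; simp)+
  then have "Tconj_down a b (\<lambda>\<tau> \<rho>. - sqrt2 * gen_bl a b k \<tau> \<rho> + (1 + sqrt2) * gen_br a b (k - 1) \<tau> \<rho>) \<in> CliffGen a b"
    "Tconj_down a b (\<lambda>\<tau> \<rho>. (1 - sqrt2) * gen_bl a b k \<tau> \<rho> + sqrt2 * gen_br a b (k - 1) \<tau> \<rho>) \<in> CliffGen a b"
    using k by auto
  then have "Tconj_down a b (\<lambda>\<tau> \<rho>. (- sqrt2) * (- sqrt2 * gen_bl a b k \<tau> \<rho> + (1 + sqrt2) * gen_br a b (k - 1) \<tau> \<rho>)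
      + (1 + sqrt2) * ((1 - sqrt2) * gen_bl a b k \<tau> \<rho> + sqrt2 * gen_br a b (k - 1) \<tau> \<rho>)) \<in> CliffGen a b"
    by (rule sandwich_lincomb_CliffGen)
  moreover have "gen_bl a b k = (\<lambda>\<tau> \<rho>. (- sqrt2) * (- sqrt2 * gen_bl a b k \<tau> \<rho> + (1 + sqrt2) * gen_br a b (k - 1) \<tau> \<rho>)
      + (1 + sqrt2) * ((1 - sqrt2) * gen_bl a b k \<tau> \<rho> + sqrt2 * gen_br a b (k - 1) \<tau> \<rho>))"
    by (intro ext) (simp add: algebra_simps sqrt2_times_sqrt2)
  ultimately show ?thesis by (simp only: flip: \<open>gen_bl a b k = _\<close>)
qed

lemma Tconj_down_gen_br_CliffGen:
  assumes "a < b" "a \<le> k" "k \<le> b - 1"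
  shows "Tconj_down a b (gen_br a b k) \<in> CliffGen a b"
proof (cases "k = b - 1")
  case True
  have "Tconj_down a b (gen_br a b (b - 1)) = gen_tr a b (b - 1)"
    using assms by (intro Tconj_down_eqI gen_tr_Tmat_right op_supported_cgen) auto
  then show ?thesis unfolding True using assms by auto
next
  case False
  then have k: "a < k + 1" "k + 1 < b" using assms by auto
  have "Tconj_down a b (\<lambda>\<tau> \<rho>. - sqrt2 * gen_bl a b (k + 1) \<tau> \<rho> + (1 + sqrt2) * gen_br a b k \<tau> \<rho>) = gen_tl a b (k + 1)"
    "Tconj_down a b (\<lambda>\<tau> \<rho>. (1 - sqrt2) * gen_bl a b (k + 1) \<tau> \<rho> + sqrt2 * gen_br a b k \<tau> \<rho>) = gen_tr a b k"
    using k gen_tl_Tmat_bulk[OF k] gen_tr_Tmat_bulk[OF k]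
    by (intro Tconj_down_eqI op_supported_cgen; simp)+
  then have "Tconj_down a b (\<lambda>\<tau> \<rho>. - sqrt2 * gen_bl a b (k + 1) \<tau> \<rho> + (1 + sqrt2) * gen_br a b k \<tau> \<rho>) \<in> CliffGen a b"
    "Tconj_down a b (\<lambda>\<tau> \<rho>. (1 - sqrt2) * gen_bl a b (k + 1) \<tau> \<rho> + sqrt2 * gen_br a b k \<tau> \<rho>) \<in> CliffGen a b"
    using k by auto
  then have "Tconj_down a b (\<lambda>\<tau> \<rho>. (1 - sqrt2) * (- sqrt2 * gen_bl a b (k + 1) \<tau> \<rho> + (1 + sqrt2) * gen_br a b k \<tau> \<rho>)
      + sqrt2 * ((1 - sqrt2) * gen_bl a b (k + 1) \<tau> \<rho> + sqrt2 * gen_br a b k \<tau> \<rho>)) \<in> CliffGen a b"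
    by (rule sandwich_lincomb_CliffGen)
  moreover have "gen_br a b k = (\<lambda>\<tau> \<rho>. (1 - sqrt2) * (- sqrt2 * gen_bl a b (k + 1) \<tau> \<rho> + (1 + sqrt2) * gen_br a b k \<tau> \<rho>)
      + sqrt2 * ((1 - sqrt2) * gen_bl a b (k + 1) \<tau> \<rho> + sqrt2 * gen_br a b k \<tau> \<rho>))"
    by (intro ext) (simp add: algebra_simps sqrt2_times_sqrt2)
  ultimately show ?thesis by (simp only: flip: \<open>gen_br a b k = _\<close>)
qed

lemma Tconj_down_cgen_CliffGen:
  assumes "a < b" "a \<le> k" "k \<le> b - 1"
  shows "Tconj_down a b (cgen a b k \<alpha> \<gamma>) \<in> CliffGen a b"
  using Tconj_down_gen_bl_CliffGen[OF assms] Tconj_down_gen_br_CliffGen[OF assms]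
  by (subst cgen_eq_bl_br) (rule sandwich_lincomb_CliffGen)

lemma op_pow_0 [simp]: "op_pow a b M 0 = op_id a b"
  and op_pow_Suc: "op_pow a b M (Suc n) = op_mult a b M (op_pow a b M n)"
  by (simp_all add: op_pow_def)

lemma op_supported_op_pow [intro]: "op_supported a b M \<Longrightarrow> op_supported a b (op_pow a b M n)"
  by (induction n) (auto simp: op_pow_Suc)

lemma op_pow_Suc_right: "op_supported a b M \<Longrightarrow> op_pow a b M (Suc n) = op_mult a b (op_pow a b M n) M"
proof (induction n)
  case 0
  then show ?case by (simp add: op_pow_Suc op_mult_id_left op_mult_id_right)
next
  case (Suc n)
  have "op_pow a b M (Suc (Suc n)) = op_mult a b M (op_mult a b (op_pow a b M n) M)"
    using Suc by (simp add: op_pow_Suc)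
  then show ?case by (simp add: op_pow_Suc op_mult_assoc)
qed

lemma op_zpow_of_nat: "op_zpow a b M (int n) = op_pow a b M n"
  by (simp add: op_zpow_def)

lemma op_zpow_Tmat_neg: "op_zpow a b (Tmat a b) (- int n) = op_pow a b (Tmat_inv a b) n"
  by (cases "n = 0") (simp_all add: op_zpow_def op_inv_Tmat)

lemma op_zpow_Tmat_succ:
  "op_zpow a b (Tmat a b) (y + 1) = op_mult a b (Tmat a b) (op_zpow a b (Tmat a b) y)"
  "op_zpow a b (Tmat a b) (- (y + 1)) = op_mult a b (op_zpow a b (Tmat a b) (- y)) (Tmat_inv a b)"
proof -
  have cancel: "op_mult a b (Tmat a b) (op_mult a b (Tmat_inv a b) M) = M"
    "op_mult a b (op_mult a b M (Tmat a b)) (Tmat_inv a b) = M" if "op_supported a b M" for M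
    using that by (simp_all add: op_mult_id_left op_mult_id_right Tmat_inverse flip: op_mult_assoc)
      (simp add: op_mult_assoc Tmat_inverse op_mult_id_right)
  have "op_zpow a b (Tmat a b) (y + 1) = op_mult a b (Tmat a b) (op_zpow a b (Tmat a b) y)
      \<and> op_zpow a b (Tmat a b) (- (y + 1)) = op_mult a b (op_zpow a b (Tmat a b) (- y)) (Tmat_inv a b)"
  proof (cases "0 \<le> y")
    case True
    then obtain n where "y = int n" using nonneg_int_cases by blast
    then have "y + 1 = int (Suc n)" "- (y + 1) = - int (Suc n)" by simp_all
    then have "op_zpow a b (Tmat a b) (y + 1) = op_pow a b (Tmat a b) (Suc n)"
      "op_zpow a b (Tmat a b) (- (y + 1)) = op_pow a b (Tmat_inv a b) (Suc n)"
      "op_zpow a b (Tmat a b) y = op_pow a b (Tmat a b) n"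
      "op_zpow a b (Tmat a b) (- y) = op_pow a b (Tmat_inv a b) n"
      using \<open>y = int n\<close> by (simp_all only: op_zpow_of_nat op_zpow_Tmat_neg)
    moreover have "op_pow a b (Tmat_inv a b) (Suc n) = op_mult a b (op_pow a b (Tmat_inv a b) n) (Tmat_inv a b)"
      by (rule op_pow_Suc_right) blast
    ultimately show ?thesis by (simp only: op_pow_Suc)
  next
    case False
    then obtain m where y: "y = - int (Suc m)" using negD[of y] by auto
    then have "y + 1 = - int m" "- (y + 1) = int m" "- y = int (Suc m)" by simp_all
    then have "op_zpow a b (Tmat a b) (y + 1) = op_pow a b (Tmat_inv a b) m"
      "op_zpow a b (Tmat a b) (- (y + 1)) = op_pow a b (Tmat a b) m"
      "op_zpow a b (Tmat a b) y = op_pow a b (Tmat_inv a b) (Suc m)"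
      "op_zpow a b (Tmat a b) (- y) = op_pow a b (Tmat a b) (Suc m)"
      using y by (simp_all only: op_zpow_of_nat op_zpow_Tmat_neg)
    moreover have "op_mult a b (Tmat a b) (op_pow a b (Tmat_inv a b) (Suc m)) = op_pow a b (Tmat_inv a b) m"
      by (simp add: op_pow_Suc cancel op_supported_op_pow op_supported_Tmat_inv)
    moreover have "op_mult a b (op_pow a b (Tmat a b) (Suc m)) (Tmat_inv a b) = op_pow a b (Tmat a b) m"
      by (simp add: op_pow_Suc_right cancel op_supported_op_pow op_supported_Tmat)
    ultimately show ?thesis by (simp only: simp_thms)
  qed
  then show "op_zpow a b (Tmat a b) (y + 1) = op_mult a b (Tmat a b) (op_zpow a b (Tmat a b) y)"
    "op_zpow a b (Tmat a b) (- (y + 1)) = op_mult a b (op_zpow a b (Tmat a b) (- y)) (Tmat_inv a b)"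
    by simp_all
qed

lemma Tconj_succ: "Tconj a b (y + 1) X = Tconj a b y (Tconj_up a b X)"
  unfolding Tconj_def sandwich_def op_zpow_Tmat_succ op_mult_assoc ..

lemma Tconj_pred:
  assumes "op_supported a b X"
  shows "Tconj a b (y - 1) X = Tconj a b y (Tconj_down a b X)"
proof -
  have "Tconj_up a b (Tconj_down a b X)
      = op_mult a b (op_mult a b (Tmat_inv a b) (Tmat a b)) (op_mult a b X (op_mult a b (Tmat_inv a b) (Tmat a b)))"
    unfolding sandwich_def by (simp only: op_mult_assoc)
  also have "\<dots> = X"
    using assms by (simp add: Tmat_inverse op_mult_id_left op_mult_id_right)
  finally have "Tconj_up a b (Tconj_down a b X) = X" .
  then show ?thesis using Tconj_succ[of a b "y - 1" "Tconj_down a b X"] by simp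
qed

lemma Tconj_0: "op_supported a b X \<Longrightarrow> Tconj a b 0 X = X"
  unfolding Tconj_def sandwich_def op_zpow_def by (simp add: op_mult_id_left op_mult_id_right)

lemma Tconj_lincomb:
  "Tconj a b y (\<lambda>\<tau> \<rho>. c1 * A \<tau> \<rho> + c2 * B \<tau> \<rho>) = (\<lambda>\<tau> \<rho>. c1 * Tconj a b y A \<tau> \<rho> + c2 * Tconj a b y B \<tau> \<rho>)"
  unfolding Tconj_def by (rule sandwich_lincomb)

lemma Tconj_CliffGen:
  assumes "a < b"
  shows "X \<in> CliffGen a b \<Longrightarrow> Tconj a b y X \<in> CliffGen a b"
proof (induction y arbitrary: X rule: int_induct[where k = 0])
  case base
  then show ?case using Tconj_0 op_supported_CliffGen by simp
next
  case (step1 y)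
  have "Tconj_up a b X \<in> CliffGen a b"
    using assms step1.prems by (auto intro: sandwich_CliffGen[OF Tconj_up_cgen_CliffGen])
  then show ?case using step1.IH by (simp add: Tconj_succ)
next
  case (step2 y)
  have "Tconj_down a b X \<in> CliffGen a b"
    using assms step2.prems by (auto intro: sandwich_CliffGen[OF Tconj_down_cgen_CliffGen])
  then show ?case using step2.IH op_supported_CliffGen[OF step2.prems] by (simp add: Tconj_pred)
qed

section \<open>The operators on vertical edges\<close>

definition omega :: complex where "omega = Complex (sqrt 2 / 2) (sqrt 2 / 2)"

definition "g_bl = Complex (-1/2) (-1/2 + sqrt 2 / 2)"
definition "g_br = Complex (-1/2) (1/2 + sqrt 2 / 2)"
definition "g_tl = Complex (1/2) (-1/2 + sqrt 2 / 2)"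
definition "g_tr = Complex (1/2) (1/2 + sqrt 2 / 2)"

text \<open>The coefficients below are the solution of the CSH equations at the lower endpoint of a
  vertical edge.\<close>

definition "c_right = Complex (- sqrt 2 / 4) (-1/2 + sqrt 2 / 4)"
definition "c_left = Complex (sqrt 2 / 4) (1/2 + sqrt 2 / 4)"
definition "c_star_right = Complex (-1/2 + sqrt 2 / 4) (- sqrt 2 / 4)"
definition "c_star_left = Complex (1/2 + sqrt 2 / 4) (sqrt 2 / 4)"
definition "c_a = Complex (-1 + sqrt 2 / 2) 0"
definition "c_star_a = Complex 0 (-1 + sqrt 2 / 2)"
definition "c_b = Complex 0 (sqrt 2 / 2)"
definition "c_star_b = Complex (sqrt 2 / 2) 0"

definition psi_vert :: "int \<Rightarrow> int \<Rightarrow> int \<Rightarrow> op" where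
  "psi_vert a b x = (\<lambda>\<tau> \<rho>. if x = a then c_a * gen_bl a b a \<tau> \<rho>
     else if x = b then c_b * gen_br a b (b - 1) \<tau> \<rho>
     else c_right * gen_bl a b x \<tau> \<rho> + c_left * gen_br a b (x - 1) \<tau> \<rho>)"

definition psi_star_vert :: "int \<Rightarrow> int \<Rightarrow> int \<Rightarrow> op" where
  "psi_star_vert a b x = (\<lambda>\<tau> \<rho>. if x = a then c_star_a * gen_bl a b a \<tau> \<rho>
     else if x = b then c_star_b * gen_br a b (b - 1) \<tau> \<rho>
     else c_star_right * gen_bl a b x \<tau> \<rho> + c_star_left * gen_br a b (x - 1) \<tau> \<rho>)"

lemmas vert_constant_defs = omega_def g_bl_def g_br_def g_tl_def g_tr_def c_right_def c_left_def
  c_star_right_def c_star_left_def c_a_def c_star_a_def c_b_def c_star_b_def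

lemma sqrt_2_squared: "sqrt 2 * sqrt 2 = (2::real)" "sqrt 2 * (sqrt 2 * x) = 2 * (x::real)"
  by (simp_all flip: mult.assoc)

lemma psi0_corners:
  "psi0 a b k \<tau> \<rho> + (- omega) * psi0_star a b k \<tau> \<rho> = g_bl * gen_bl a b k \<tau> \<rho>"
  "psi0 a b k \<tau> \<rho> + (\<i> * omega) * psi0_star a b k \<tau> \<rho> = g_br * gen_br a b k \<tau> \<rho>"
  "psi0 a b k \<tau> \<rho> + (- \<i> * omega) * psi0_star a b k \<tau> \<rho> = g_tl * gen_tl a b k \<tau> \<rho>"
  "psi0 a b k \<tau> \<rho> + omega * psi0_star a b k \<tau> \<rho> = g_tr * gen_tr a b k \<tau> \<rho>"
proof -
  have comb: "psi0 a b k \<tau> \<rho> + l * psi0_star a b k \<tau> \<rho>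
      = cgen a b k (-1 / sqrt2 + l * (- \<i> / sqrt2)) (\<i> / sqrt2 + l * (1 / sqrt2)) \<tau> \<rho>" for l
    unfolding psi0_eq_cgen psi0_star_eq_cgen using cgen_lincomb[of 1 a b k _ _ \<tau> \<rho> l] by simp
  have "-1 / sqrt2 + (- omega) * (- \<i> / sqrt2) = g_bl * (1 + sqrt2)" "\<i> / sqrt2 + (- omega) * (1 / sqrt2) = g_bl"
    "-1 / sqrt2 + (\<i> * omega) * (- \<i> / sqrt2) = g_br * (sqrt2 - 1)" "\<i> / sqrt2 + (\<i> * omega) * (1 / sqrt2) = g_br"
    "-1 / sqrt2 + (- \<i> * omega) * (- \<i> / sqrt2) = g_tl * (- (1 + sqrt2))" "\<i> / sqrt2 + (- \<i> * omega) * (1 / sqrt2) = g_tl"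
    "-1 / sqrt2 + omega * (- \<i> / sqrt2) = g_tr * (1 - sqrt2)" "\<i> / sqrt2 + omega * (1 / sqrt2) = g_tr"
    by (simp_all add: complex_eq_iff vert_constant_defs algebra_simps sqrt_2_squared field_simps)
  then show "psi0 a b k \<tau> \<rho> + (- omega) * psi0_star a b k \<tau> \<rho> = g_bl * gen_bl a b k \<tau> \<rho>"
    "psi0 a b k \<tau> \<rho> + (\<i> * omega) * psi0_star a b k \<tau> \<rho> = g_br * gen_br a b k \<tau> \<rho>"
    "psi0 a b k \<tau> \<rho> + (- \<i> * omega) * psi0_star a b k \<tau> \<rho> = g_tl * gen_tl a b k \<tau> \<rho>"
    "psi0 a b k \<tau> \<rho> + omega * psi0_star a b k \<tau> \<rho> = g_tr * gen_tr a b k \<tau> \<rho>"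
    unfolding comb cgen_scale by simp_all
qed

lemma psi_vert_lincomb:
  "psi_vert a b x \<tau> \<rho> + l * psi_star_vert a b x \<tau> \<rho> =
    (if x = a then (c_a + l * c_star_a) * gen_bl a b a \<tau> \<rho>
     else if x = b then (c_b + l * c_star_b) * gen_br a b (b - 1) \<tau> \<rho>
     else (c_right + l * c_star_right) * gen_bl a b x \<tau> \<rho> + (c_left + l * c_star_left) * gen_br a b (x - 1) \<tau> \<rho>)"
  unfolding psi_vert_def psi_star_vert_def by (simp add: algebra_simps)

lemma vert_coefficients:
  "c_right + (- omega) * c_star_right = g_bl" "c_left + (- omega) * c_star_left = 0"
  "c_a + (- omega) * c_star_a = g_bl"
  "c_right + (\<i> * omega) * c_star_right = 0" "c_left + (\<i> * omega) * c_star_left = g_br"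
  "c_b + (\<i> * omega) * c_star_b = g_br"
  "c_right + (- \<i> * omega) * c_star_right = g_tl * (- sqrt2)"
  "c_left + (- \<i> * omega) * c_star_left = g_tl * (1 + sqrt2)"
  "c_a + (- \<i> * omega) * c_star_a = g_tl * (-1)"
  "c_right + omega * c_star_right = g_tr * (1 - sqrt2)" "c_left + omega * c_star_left = g_tr * sqrt2"
  "c_b + omega * c_star_b = g_tr"
  "c_a + \<i> * c_star_a = 0" "c_b + (- \<i>) * c_star_b = 0"
  by (simp_all add: complex_eq_iff vert_constant_defs algebra_simps sqrt_2_squared)

lemma csh_vert_bottom_left:
  assumes "a \<le> X" "X < b"
  shows "psi0 a b X \<tau> \<rho> + (- omega) * psi0_star a b X \<tau> \<rho> = psi_vert a b X \<tau> \<rho> + (- omega) * psi_star_vert a b X \<tau> \<rho>"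
  using assms unfolding psi0_corners psi_vert_lincomb vert_coefficients by simp

lemma csh_vert_bottom_right:
  assumes "a < X" "X \<le> b"
  shows "psi0 a b (X - 1) \<tau> \<rho> + (\<i> * omega) * psi0_star a b (X - 1) \<tau> \<rho>
       = psi_vert a b X \<tau> \<rho> + (\<i> * omega) * psi_star_vert a b X \<tau> \<rho>"
  using assms unfolding psi0_corners psi_vert_lincomb vert_coefficients by simp

lemma psi_vert_boundary:
  assumes "a < b"
  shows "psi_vert a b a \<tau> \<rho> + \<i> * psi_star_vert a b a \<tau> \<rho> = 0"
    and "psi_vert a b b \<tau> \<rho> - \<i> * psi_star_vert a b b \<tau> \<rho> = 0"
proof -
  show "psi_vert a b a \<tau> \<rho> + \<i> * psi_star_vert a b a \<tau> \<rho> = 0"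
    unfolding psi_vert_lincomb vert_coefficients by simp
  have "psi_vert a b b \<tau> \<rho> + (- \<i>) * psi_star_vert a b b \<tau> \<rho> = 0"
    using assms unfolding psi_vert_lincomb vert_coefficients by simp
  then show "psi_vert a b b \<tau> \<rho> - \<i> * psi_star_vert a b b \<tau> \<rho> = 0" by simp
qed

lemma csh_vert_top_left:
  assumes "a < b" "a \<le> X" "X < b"
  shows "Tconj_up a b (\<lambda>\<tau> \<rho>. psi0 a b X \<tau> \<rho> + (- \<i> * omega) * psi0_star a b X \<tau> \<rho>)
       = (\<lambda>\<tau> \<rho>. psi_vert a b X \<tau> \<rho> + (- \<i> * omega) * psi_star_vert a b X \<tau> \<rho>)"
proof -
  have "Tconj_up a b (\<lambda>\<tau> \<rho>. psi0 a b X \<tau> \<rho> + (- \<i> * omega) * psi0_star a b X \<tau> \<rho>)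
      = (\<lambda>\<tau> \<rho>. g_tl * Tconj_up a b (gen_tl a b X) \<tau> \<rho> + 0 * Tconj_up a b (gen_tl a b X) \<tau> \<rho>)"
    unfolding psi0_corners sandwich_lincomb[symmetric] by simp
  also have "\<dots> = (\<lambda>\<tau> \<rho>. psi_vert a b X \<tau> \<rho> + (- \<i> * omega) * psi_star_vert a b X \<tau> \<rho>)"
  proof (cases "X = a")
    case True
    show ?thesis
      unfolding True psi_vert_lincomb vert_coefficients Tconj_up_gen_tl_left[OF assms(1)]
      by (simp add: fun_eq_iff cgen_def flip_op_def algebra_simps)
  next
    case False
    then have "a < X" using assms by simp
    then show ?thesis
      unfolding psi_vert_lincomb vert_coefficients Tconj_up_gen_tl[OF \<open>a < X\<close> assms(3)] using False assms
      by (simp add: fun_eq_iff algebra_simps)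
  qed
  finally show ?thesis .
qed

lemma csh_vert_top_right:
  assumes "a < b" "a < X" "X \<le> b"
  shows "Tconj_up a b (\<lambda>\<tau> \<rho>. psi0 a b (X - 1) \<tau> \<rho> + omega * psi0_star a b (X - 1) \<tau> \<rho>)
       = (\<lambda>\<tau> \<rho>. psi_vert a b X \<tau> \<rho> + omega * psi_star_vert a b X \<tau> \<rho>)"
proof -
  have "Tconj_up a b (\<lambda>\<tau> \<rho>. psi0 a b (X - 1) \<tau> \<rho> + omega * psi0_star a b (X - 1) \<tau> \<rho>)
      = (\<lambda>\<tau> \<rho>. g_tr * Tconj_up a b (gen_tr a b (X - 1)) \<tau> \<rho> + 0 * Tconj_up a b (gen_tr a b (X - 1)) \<tau> \<rho>)"
    unfolding psi0_corners sandwich_lincomb[symmetric] by simp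
  also have "\<dots> = (\<lambda>\<tau> \<rho>. psi_vert a b X \<tau> \<rho> + omega * psi_star_vert a b X \<tau> \<rho>)"
  proof (cases "X = b")
    case True
    show ?thesis
      unfolding True psi_vert_lincomb vert_coefficients Tconj_up_gen_tr_right[OF assms(1)]
      using assms by (simp add: fun_eq_iff)
  next
    case False
    then have "X < b" using assms by simp
    then show ?thesis
      unfolding psi_vert_lincomb vert_coefficients Tconj_up_gen_tr[OF assms(2) \<open>X < b\<close>] using False assms
      by (simp add: fun_eq_iff algebra_simps)
  qed
  finally show ?thesis .
qed

lemma CliffGen_psi_vert:
  assumes "a < b" "a \<le> x" "x \<le> b"
  shows "psi_vert a b x \<in> CliffGen a b \<and> psi_star_vert a b x \<in> CliffGen a b"
proof -
  have scale: "(\<lambda>\<tau> \<rho>. c * cgen a b k \<alpha> \<gamma> \<tau> \<rho>) \<in> CliffGen a b" if "a \<le> k" "k \<le> b - 1" for c k \<alpha> \<gamma>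
    using CliffGen_lincomb[OF CliffGen_cgen[OF that, of \<alpha> \<gamma>] CliffGen_cgen[OF that, of \<alpha> \<gamma>], of c 0]
    by simp
  consider "x = a" | "x = b" | "a < x" "x < b" using assms by linarith
  then show ?thesis
  proof cases
    case 1
    then show ?thesis unfolding psi_vert_def psi_star_vert_def using assms by (simp add: scale)
  next
    case 2
    then show ?thesis unfolding psi_vert_def psi_star_vert_def using assms by (simp add: scale)
  next
    case 3
    then show ?thesis unfolding psi_vert_def psi_star_vert_def by (simp add: CliffGen_lincomb CliffGen_cgen)
  qed
qed

section \<open>Geometry of the strip\<close>

abbreviation hedge :: "int \<Rightarrow> int \<Rightarrow> complex" where "hedge k y \<equiv> Complex (of_int k + 1/2) (of_int y)"
abbreviation vedge :: "int \<Rightarrow> int \<Rightarrow> complex" where "vedge x y \<equiv> Complex (of_int x) (of_int y + 1/2)"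
abbreviation vertex :: "int \<Rightarrow> int \<Rightarrow> complex" where "vertex x y \<equiv> Complex (of_int x) (of_int y)"
abbreviation face :: "int \<Rightarrow> int \<Rightarrow> complex" where "face k y \<equiv> Complex (of_int k + 1/2) (of_int y + 1/2)"

lemma cmod_half_iff:
  "cmod (Complex (of_int m + 1/2) (of_int n)) = 1/2 \<longleftrightarrow> n = 0 \<and> (m = 0 \<or> m = -1)"
  "cmod (Complex (of_int n) (of_int m + 1/2)) = 1/2 \<longleftrightarrow> n = 0 \<and> (m = 0 \<or> m = -1)"
proof -
  have int: "m * m + m + n * n = 0 \<longleftrightarrow> n = 0 \<and> (m = 0 \<or> m = -1)"
  proof
    assume h: "m * m + m + n * n = 0"
    have "m * m + m \<ge> 0"
    proof (cases "m \<ge> 0")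
      case False
      then have "m * (m + 1) \<ge> 0" by (simp add: mult_nonpos_nonpos)
      then show ?thesis by (simp add: algebra_simps)
    qed simp
    moreover have "n * n \<ge> 0" by simp
    ultimately have "n * n = 0" using h by linarith
    then have "n = 0" by simp
    moreover have "m * (m + 1) = 0" using h \<open>n = 0\<close> by (simp add: algebra_simps)
    ultimately show "n = 0 \<and> (m = 0 \<or> m = -1)" by auto
  qed auto
  have "cmod (Complex u w) = 1/2 \<longleftrightarrow> u * u + w * w = 1/4" for u w
  proof -
    have "cmod (Complex u w) = 1/2 \<longleftrightarrow> (cmod (Complex u w))\<^sup>2 = (1/2)\<^sup>2"
      by (rule power2_eq_iff_nonneg[symmetric]) auto
    then show ?thesis using cmod_power2[of "Complex u w"] by (simp add: power2_eq_square)
  qed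
  moreover have "(of_int m + 1/2) * (of_int m + 1/2) + of_int n * of_int n = (1/4 :: real)
      \<longleftrightarrow> (of_int (m * m + m + n * n) :: real) = 0"
    by (simp add: algebra_simps) linarith
  moreover have "cmod (Complex (of_int n) (of_int m + 1/2)) = cmod (Complex (of_int m + 1/2) (of_int n))"
    by (simp add: cmod_def add.commute)
  ultimately show "cmod (Complex (of_int m + 1/2) (of_int n)) = 1/2 \<longleftrightarrow> n = 0 \<and> (m = 0 \<or> m = -1)"
    "cmod (Complex (of_int n) (of_int m + 1/2)) = 1/2 \<longleftrightarrow> n = 0 \<and> (m = 0 \<or> m = -1)"
    unfolding of_int_eq_0_iff int by simp_all
qed

lemma Complex_diff: "Complex x1 y1 - Complex x2 y2 = Complex (x1 - x2) (y1 - y2)"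
  by (simp add: complex_eq_iff)

lemma hedge_vertex_adjacent: "cmod (hedge k y - vertex X Y) = 1/2 \<longleftrightarrow> Y = y \<and> (X = k \<or> X = k + 1)"
proof -
  have e: "hedge k y - vertex X Y = Complex (of_int (k - X) + 1/2) (of_int (y - Y))"
    by (simp add: Complex_diff)
  show ?thesis unfolding e cmod_half_iff by auto
qed

lemma hedge_face_adjacent: "cmod (hedge k y - face K Y) = 1/2 \<longleftrightarrow> K = k \<and> (Y = y \<or> Y = y - 1)"
proof -
  have e: "hedge k y - face K Y = Complex (of_int (k - K)) (of_int (y - Y - 1) + 1/2)"
    by (simp add: Complex_diff)
  show ?thesis unfolding e cmod_half_iff by auto
qed

lemma vedge_vertex_adjacent: "cmod (vedge x y - vertex X Y) = 1/2 \<longleftrightarrow> X = x \<and> (Y = y \<or> Y = y + 1)"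
proof -
  have e: "vedge x y - vertex X Y = Complex (of_int (x - X)) (of_int (y - Y) + 1/2)"
    by (simp add: Complex_diff)
  show ?thesis unfolding e cmod_half_iff by auto
qed

lemma vedge_face_adjacent: "cmod (vedge x y - face K Y) = 1/2 \<longleftrightarrow> Y = y \<and> (K = x \<or> K = x - 1)"
proof -
  have e: "vedge x y - face K Y = Complex (of_int (x - K - 1) + 1/2) (of_int (y - Y))"
    by (simp add: Complex_diff)
  show ?thesis unfolding e cmod_half_iff by auto
qed

definition csh_coeff :: "complex \<Rightarrow> complex \<Rightarrow> complex" where
  "csh_coeff v p = \<i> * complex_of_real (cmod (v - p)) / (v - p)"

lemma csh_coeff_corner:
  assumes "x = k \<or> x = k + 1" "y = y' \<or> y = y' + 1"
  shows "csh_coeff (vertex x y) (face k y') =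
    (if x = k then (if y = y' then - omega else - \<i> * omega) else (if y = y' then \<i> * omega else omega))"
proof -
  have coeff: "csh_coeff v p = c"
    if d: "v - p = Complex s t" and st: "s * s = 1/4" "t * t = 1/4" and c: "\<i> * sqrt2 / 2 = c * Complex s t"
    for v p s t c
  proof -
    have "cmod (Complex s t) = sqrt (s * s + t * t)" by (simp add: cmod_def power2_eq_square)
    also have "s * s + t * t = 1/2" using st by simp
    also have "sqrt (1/2) = sqrt 2 / 2"
      using real_sqrt_divide[of 2 4] by (simp add: real_sqrt_four)
    finally have cm: "cmod (Complex s t) = sqrt 2 / 2" .
    have "Complex s t \<noteq> 0" using st by (auto simp: complex_eq_iff)
    then show ?thesis using c unfolding csh_coeff_def d cm by (simp add: field_simps)
  qed
  have "vertex x y - face k y' = Complex (of_int (x - k) - 1/2) (of_int (y - y') - 1/2)"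
    by (simp add: Complex_diff)
  note coeff = coeff[OF this]
  show ?thesis
    by (insert assms, elim disjE; rule coeff)
      (simp_all add: complex_eq_iff omega_def algebra_simps sqrt_2_squared)
qed

lemma csh_coeff_lower_upper:
  assumes "x = k \<or> x = k + 1"
  shows "csh_coeff (vertex x y) (face k y) \<noteq> csh_coeff (vertex x (y + 1)) (face k y)"
proof -
  have "csh_coeff (vertex x y) (face k y) = (if x = k then - omega else \<i> * omega)"
    "csh_coeff (vertex x (y + 1)) (face k y) = (if x = k then - \<i> * omega else omega)"
    using csh_coeff_corner[of x k y y] csh_coeff_corner[of x k "y + 1" y] assms by simp_all
  then show ?thesis by (simp add: complex_eq_iff omega_def)
qed

definition psi_ext :: "int \<Rightarrow> int \<Rightarrow> complex \<Rightarrow> op" where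
  "psi_ext a b z = (if Im z = of_int \<lfloor>Im z\<rfloor> then Tconj a b \<lfloor>Im z\<rfloor> (psi0 a b \<lfloor>Re z\<rfloor>)
                    else Tconj a b \<lfloor>Im z\<rfloor> (psi_vert a b \<lfloor>Re z\<rfloor>))"

definition psi_star_ext :: "int \<Rightarrow> int \<Rightarrow> complex \<Rightarrow> op" where
  "psi_star_ext a b z = (if Im z = of_int \<lfloor>Im z\<rfloor> then Tconj a b \<lfloor>Im z\<rfloor> (psi0_star a b \<lfloor>Re z\<rfloor>)
                         else Tconj a b \<lfloor>Im z\<rfloor> (psi_star_vert a b \<lfloor>Re z\<rfloor>))"

lemma floor_plus_half [simp]: "\<lfloor>(of_int k + 1/2 :: real)\<rfloor> = k"
  by (rule floor_unique) auto

lemma plus_half_not_int: "(of_int y + 1/2 :: real) \<noteq> of_int k"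
proof
  assume "(of_int y + 1/2 :: real) = of_int k"
  then have "(of_int (2 * y + 1) :: real) = of_int (2 * k)" by simp
  then have "2 * y + 1 = 2 * k" by (simp only: of_int_eq_iff)
  then show False by presburger
qed

lemma psi_ext_hedge:
  "psi_ext a b (hedge k y) = Tconj a b y (psi0 a b k)"
  "psi_star_ext a b (hedge k y) = Tconj a b y (psi0_star a b k)"
  by (simp_all add: psi_ext_def psi_star_ext_def)

lemma psi_ext_vedge:
  "psi_ext a b (vedge x y) = Tconj a b y (psi_vert a b x)"
  "psi_star_ext a b (vedge x y) = Tconj a b y (psi_star_vert a b x)"
  by (simp_all add: psi_ext_def psi_star_ext_def plus_half_not_int)

lemma Tconj_lincomb_eq:
  assumes "\<And>\<tau> \<rho>. A \<tau> \<rho> + l * B \<tau> \<rho> = C \<tau> \<rho> + l * D \<tau> \<rho>"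
  shows "Tconj a b y A \<tau> \<rho> + l * Tconj a b y B \<tau> \<rho> = Tconj a b y C \<tau> \<rho> + l * Tconj a b y D \<tau> \<rho>"
proof -
  have "(\<lambda>\<tau> \<rho>. 1 * A \<tau> \<rho> + l * B \<tau> \<rho>) = (\<lambda>\<tau> \<rho>. 1 * C \<tau> \<rho> + l * D \<tau> \<rho>)"
    using assms by simp
  then have "Tconj a b y (\<lambda>\<tau> \<rho>. 1 * A \<tau> \<rho> + l * B \<tau> \<rho>) \<tau> \<rho> = Tconj a b y (\<lambda>\<tau> \<rho>. 1 * C \<tau> \<rho> + l * D \<tau> \<rho>) \<tau> \<rho>"
    by (rule arg_cong)
  then show ?thesis unfolding Tconj_lincomb by simp
qed

lemma Tconj_succ_lincomb_eq:
  assumes "Tconj_up a b (\<lambda>\<tau> \<rho>. A \<tau> \<rho> + l * B \<tau> \<rho>) = (\<lambda>\<tau> \<rho>. C \<tau> \<rho> + l * D \<tau> \<rho>)"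
  shows "Tconj a b (y + 1) A \<tau> \<rho> + l * Tconj a b (y + 1) B \<tau> \<rho> = Tconj a b y C \<tau> \<rho> + l * Tconj a b y D \<tau> \<rho>"
proof -
  have "Tconj a b (y + 1) (\<lambda>\<tau> \<rho>. 1 * A \<tau> \<rho> + l * B \<tau> \<rho>) \<tau> \<rho> = Tconj a b y (\<lambda>\<tau> \<rho>. 1 * C \<tau> \<rho> + l * D \<tau> \<rho>) \<tau> \<rho>"
    using assms by (simp add: Tconj_succ)
  then show ?thesis unfolding Tconj_lincomb by simp
qed

lemma csh_hedge_vedge:
  assumes ab: "a < b" and k: "a \<le> k" "k \<le> b - 1" and x: "x = k \<or> x = k + 1" and y: "y = y' \<or> y = y' + 1"
  shows "psi_ext a b (hedge k y) \<tau> \<rho> + csh_coeff (vertex x y) (face k y') * psi_star_ext a b (hedge k y) \<tau> \<rho>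
       = psi_ext a b (vedge x y') \<tau> \<rho> + csh_coeff (vertex x y) (face k y') * psi_star_ext a b (vedge x y') \<tau> \<rho>"
  using x y
proof (elim disjE)
  assume xy: "x = k" "y = y'"
  then have c: "csh_coeff (vertex k y') (face k y') = - omega" using csh_coeff_corner[OF x y] by simp
  show ?thesis unfolding xy c psi_ext_hedge psi_ext_vedge
    by (intro Tconj_lincomb_eq csh_vert_bottom_left) (use k in auto)
next
  assume xy: "x = k" "y = y' + 1"
  then have c: "csh_coeff (vertex k (y' + 1)) (face k y') = - \<i> * omega" using csh_coeff_corner[OF x y] by simp
  show ?thesis unfolding xy c psi_ext_hedge psi_ext_vedge
    by (intro Tconj_succ_lincomb_eq csh_vert_top_left) (use ab k in auto)
next
  assume xy: "x = k + 1" "y = y'"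
  then have c: "csh_coeff (vertex (k + 1) y') (face k y') = \<i> * omega" using csh_coeff_corner[OF x y] by simp
  show ?thesis unfolding xy c psi_ext_hedge psi_ext_vedge
    by (intro Tconj_lincomb_eq) (use csh_vert_bottom_right[of a "k + 1" b] k in simp)
next
  assume xy: "x = k + 1" "y = y' + 1"
  then have c: "csh_coeff (vertex (k + 1) (y' + 1)) (face k y') = omega" using csh_coeff_corner[OF x y] by simp
  show ?thesis unfolding xy c psi_ext_hedge psi_ext_vedge
    by (intro Tconj_succ_lincomb_eq) (use csh_vert_top_right[of a b "k + 1"] ab k in simp)
qed

lemma edges_cases:
  assumes "z \<in> edges a b"
  obtains (horizontal) k y where "a \<le> k" "k \<le> b - 1" "z = hedge k y"
    | (vertical) x y where "a \<le> x" "x \<le> b" "z = vedge x y"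
  using assms unfolding edges_def by blast

lemma csh_psi_ext:
  assumes ab: "a < b" and z: "z1 \<in> edges a b" "z2 \<in> edges a b"
    and vp: "v \<in> vertices a b" "p \<in> face_centres a b"
    and adj: "cmod (z1 - v) = 1/2" "cmod (z2 - v) = 1/2" "cmod (z1 - p) = 1/2" "cmod (z2 - p) = 1/2"
  shows "psi_ext a b z1 \<tau> \<rho> + csh_coeff v p * psi_star_ext a b z1 \<tau> \<rho>
       = psi_ext a b z2 \<tau> \<rho> + csh_coeff v p * psi_star_ext a b z2 \<tau> \<rho>"
proof -
  obtain X Y where v: "v = vertex X Y" using vp(1) unfolding vertices_def by blast
  obtain K Y' where p: "p = face K Y'" using vp(2) unfolding face_centres_def by blast
  have mixed: "psi_ext a b h \<tau> \<rho> + csh_coeff v p * psi_star_ext a b h \<tau> \<rho>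
      = psi_ext a b w \<tau> \<rho> + csh_coeff v p * psi_star_ext a b w \<tau> \<rho>"
    if "h \<in> edges a b" "h = hedge k y" "w = vedge x y2"
      "cmod (h - v) = 1/2" "cmod (w - v) = 1/2" "cmod (h - p) = 1/2" "cmod (w - p) = 1/2" for h w k y x y2
  proof -
    have "a \<le> k" "k \<le> b - 1" using that(1,2) unfolding edges_def by (auto simp: plus_half_not_int[symmetric])
    moreover have "X = x" "Y = y" "K = k" "Y' = y2" "x = k \<or> x = k + 1" "y = y2 \<or> y = y2 + 1"
      using that(4-7) unfolding that(2,3) v p hedge_vertex_adjacent hedge_face_adjacent
        vedge_vertex_adjacent vedge_face_adjacent by auto
    ultimately show ?thesis using csh_hedge_vedge[OF ab] unfolding that(2,3) v p by blast
  qed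
  show ?thesis
  proof (cases rule: edges_cases[OF z(1)]; cases rule: edges_cases[OF z(2)])
    fix k1 y1 k2 y2 assume zz: "z1 = hedge k1 y1" "z2 = hedge k2 y2"
    then have "z1 = z2" using adj unfolding zz v p hedge_vertex_adjacent hedge_face_adjacent by auto
    then show ?thesis by simp
  next
    fix x1 y1 x2 y2 assume zz: "z1 = vedge x1 y1" "z2 = vedge x2 y2"
    then have "z1 = z2" using adj unfolding zz v p vedge_vertex_adjacent vedge_face_adjacent by auto
    then show ?thesis by simp
  next
    fix k1 y1 x2 y2 assume "z1 = hedge k1 y1" "z2 = vedge x2 y2"
    then show ?thesis using mixed z(1) adj by blast
  next
    fix x1 y1 k2 y2 assume "z1 = vedge x1 y1" "z2 = hedge k2 y2"
    then show ?thesis using mixed[symmetric] z(2) adj by blast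
  qed
qed

lemma CliffGen_psi_ext:
  assumes "a < b" "z \<in> edges a b"
  shows "psi_ext a b z \<in> CliffGen a b \<and> psi_star_ext a b z \<in> CliffGen a b"
  using assms(2)
proof (cases rule: edges_cases)
  case (horizontal k y)
  then show ?thesis
    using CliffGen_psi0_lincomb[of a k b 1 0] CliffGen_psi0_lincomb[of a k b 0 1]
    by (simp add: psi_ext_hedge Tconj_CliffGen[OF assms(1)])
next
  case (vertical x y)
  then show ?thesis using CliffGen_psi_vert[OF assms(1)] by (simp add: psi_ext_vedge Tconj_CliffGen[OF assms(1)])
qed

lemma psi_ext_boundary:
  assumes "a < b"
  shows "psi_ext a b (vedge a y) \<tau> \<rho> + \<i> * psi_star_ext a b (vedge a y) \<tau> \<rho> = 0"
    and "psi_ext a b (vedge b y) \<tau> \<rho> - \<i> * psi_star_ext a b (vedge b y) \<tau> \<rho> = 0"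
proof -
  have "Tconj a b y (psi_vert a b a) \<tau> \<rho> + \<i> * Tconj a b y (psi_star_vert a b a) \<tau> \<rho>
      = Tconj a b y (\<lambda>_ _. 0) \<tau> \<rho> + \<i> * Tconj a b y (\<lambda>_ _. 0) \<tau> \<rho>"
    by (rule Tconj_lincomb_eq) (simp add: psi_vert_boundary[OF assms])
  moreover have "Tconj a b y (psi_vert a b b) \<tau> \<rho> + (- \<i>) * Tconj a b y (psi_star_vert a b b) \<tau> \<rho>
      = Tconj a b y (\<lambda>_ _. 0) \<tau> \<rho> + (- \<i>) * Tconj a b y (\<lambda>_ _. 0) \<tau> \<rho>"
    by (rule Tconj_lincomb_eq) (use psi_vert_boundary[OF assms] in simp)
  moreover have "Tconj a b y (\<lambda>_ _. 0) = (\<lambda>_ _. 0)"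
    unfolding Tconj_def sandwich_def op_mult_def by simp
  ultimately show "psi_ext a b (vedge a y) \<tau> \<rho> + \<i> * psi_star_ext a b (vedge a y) \<tau> \<rho> = 0"
    "psi_ext a b (vedge b y) \<tau> \<rho> - \<i> * psi_star_ext a b (vedge b y) \<tau> \<rho> = 0"
    by (simp_all add: psi_ext_vedge)
qed

lemma extension_conds_psi_ext:
  assumes "a < b"
  shows "extension_conds a b (psi_ext a b) (psi_star_ext a b)"
  unfolding extension_conds_def csh_coeff_def[symmetric]
proof (intro conjI ballI allI impI)
  fix z1 z2 v p \<tau> \<rho>
  assume "z1 \<in> edges a b" "z2 \<in> edges a b" "v \<in> vertices a b" "p \<in> face_centres a b"
    "cmod (z1 - v) = 1/2 \<and> cmod (z2 - v) = 1/2 \<and> cmod (z1 - p) = 1/2 \<and> cmod (z2 - p) = 1/2"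
  then show "psi_ext a b z1 \<tau> \<rho> + csh_coeff v p * psi_star_ext a b z1 \<tau> \<rho>
      = psi_ext a b z2 \<tau> \<rho> + csh_coeff v p * psi_star_ext a b z2 \<tau> \<rho>"
    using csh_psi_ext[OF assms] by blast
qed (simp_all add: CliffGen_psi_ext[OF assms] psi_ext_boundary[OF assms] psi_ext_hedge Tconj_def sandwich_def)

lemma extension_conds_csh:
  assumes "extension_conds a b \<Psi> \<Psi>s"
    and "z1 \<in> edges a b" "z2 \<in> edges a b" "v \<in> vertices a b" "p \<in> face_centres a b"
    and "cmod (z1 - v) = 1/2" "cmod (z2 - v) = 1/2" "cmod (z1 - p) = 1/2" "cmod (z2 - p) = 1/2"
  shows "\<Psi> z1 \<tau> \<rho> + csh_coeff v p * \<Psi>s z1 \<tau> \<rho> = \<Psi> z2 \<tau> \<rho> + csh_coeff v p * \<Psi>s z2 \<tau> \<rho>"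
  using assms unfolding extension_conds_def csh_coeff_def by blast

lemma lincomb_eq_two_coeffs:
  fixes l0 l1 P1 P2 Q1 Q2 :: complex
  assumes "l0 \<noteq> l1" "P1 + l0 * Q1 = P2 + l0 * Q2" "P1 + l1 * Q1 = P2 + l1 * Q2"
  shows "P1 = P2 \<and> Q1 = Q2"
proof -
  have "(l0 - l1) * (Q1 - Q2) = ((P1 + l0 * Q1) - (P2 + l0 * Q2)) - ((P1 + l1 * Q1) - (P2 + l1 * Q2))"
    by (simp add: algebra_simps)
  then have "Q1 = Q2" using assms by simp
  then show ?thesis using assms(2) by simp
qed

lemma extension_conds_unique:
  assumes ab: "a < b" and E1: "extension_conds a b \<Psi>1 \<Psi>s1" and E2: "extension_conds a b \<Psi>2 \<Psi>s2"
    and z: "z \<in> edges a b"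
  shows "\<Psi>1 z = \<Psi>2 z \<and> \<Psi>s1 z = \<Psi>s2 z"
  using z
proof (cases rule: edges_cases)
  case (horizontal k y)
  then show ?thesis using E1 E2 unfolding extension_conds_def by simp
next
  case (vertical x y)
  obtain k where k: "a \<le> k" "k \<le> b - 1" "x = k \<or> x = k + 1"
    using vertical ab by (cases "x < b") (auto intro: that[of x] that[of "b - 1"])
  have mem: "hedge k y \<in> edges a b" "hedge k (y + 1) \<in> edges a b" "vertex x y \<in> vertices a b"
    "vertex x (y + 1) \<in> vertices a b" "face k y \<in> face_centres a b"
    using k vertical unfolding edges_def vertices_def face_centres_def by blast+
  have adj: "cmod (z - vertex x y) = 1/2" "cmod (hedge k y - vertex x y) = 1/2"
    "cmod (z - face k y) = 1/2" "cmod (hedge k y - face k y) = 1/2"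
    "cmod (z - vertex x (y + 1)) = 1/2" "cmod (hedge k (y + 1) - vertex x (y + 1)) = 1/2"
    "cmod (hedge k (y + 1) - face k y) = 1/2"
    unfolding vertical(3) hedge_vertex_adjacent hedge_face_adjacent vedge_vertex_adjacent vedge_face_adjacent
    using k by auto
  note coeffs_differ = csh_coeff_lower_upper[OF k(3)]
  have hedge: "\<Psi>1 (hedge k y') = \<Psi>2 (hedge k y') \<and> \<Psi>s1 (hedge k y') = \<Psi>s2 (hedge k y')" for y'
    using E1 E2 k unfolding extension_conds_def by (elim conjE) simp
  have "\<Psi>1 z \<tau> \<rho> = \<Psi>2 z \<tau> \<rho> \<and> \<Psi>s1 z \<tau> \<rho> = \<Psi>s2 z \<tau> \<rho>" for \<tau> \<rho>
  proof (rule lincomb_eq_two_coeffs[OF coeffs_differ])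
    show "\<Psi>1 z \<tau> \<rho> + csh_coeff (vertex x y) (face k y) * \<Psi>s1 z \<tau> \<rho>
        = \<Psi>2 z \<tau> \<rho> + csh_coeff (vertex x y) (face k y) * \<Psi>s2 z \<tau> \<rho>"
      using extension_conds_csh[OF E1 z mem(1) mem(3) mem(5) adj(1-4), of \<tau> \<rho>]
        extension_conds_csh[OF E2 z mem(1) mem(3) mem(5) adj(1-4), of \<tau> \<rho>] hedge[of y]
      by simp
    show "\<Psi>1 z \<tau> \<rho> + csh_coeff (vertex x (y + 1)) (face k y) * \<Psi>s1 z \<tau> \<rho>
        = \<Psi>2 z \<tau> \<rho> + csh_coeff (vertex x (y + 1)) (face k y) * \<Psi>s2 z \<tau> \<rho>"
      using extension_conds_csh[OF E1 z mem(2) mem(4) mem(5) adj(5,6,3,7), of \<tau> \<rho>]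
        extension_conds_csh[OF E2 z mem(2) mem(4) mem(5) adj(5,6,3,7), of \<tau> \<rho>] hedge[of "y + 1"]
      by simp
  qed
  then show ?thesis by (auto simp: fun_eq_iff)
qed

theorem proposition3p5:
  fixes a b :: int
  assumes "a < 0" and "0 < b"
  shows "\<exists>\<Psi> \<Psi>s. extension_conds a b \<Psi> \<Psi>s \<and>
           (\<forall>\<Psi>' \<Psi>s'. extension_conds a b \<Psi>' \<Psi>s' \<longrightarrow>
              (\<forall>z\<in>edges a b. \<Psi>' z = \<Psi> z \<and> \<Psi>s' z = \<Psi>s z))"
proof -
  have "a < b" using assms by simp
  then show ?thesis
    using extension_conds_psi_ext extension_conds_unique by blast
qed

end
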